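(* Let $\mathcal{M}_{\hat A'\hat B'\to\hat A\hat B}$ be a bipartite quantum channel and let $\Theta^{\mathrm{PPT}}$ be a completely-PPT-preserving superchannel, i.e. $\Theta^{\mathrm{PPT}}(\mathcal{M})=\mathcal{P}^{\mathrm{post}}_{A_M\hat A\hat BB_M\to AB}\circ\mathcal{M}_{\hat A'\hat B'\to\hat A\hat B}\circ\mathcal{P}^{\mathrm{pre}}_{A'B'\to\hat A'\hat B'A_MB_M}$ for completely PPT-preserving channels $\mathcal{P}^{\mathrm{pre}},\mathcal{P}^{\mathrm{post}}$. Then $$E_N(\mathcal{M})\ge E_N(\Theta^{\mathrm{PPT}}(\mathcal{M})).$$
   Context: $T_X$ denotes partial transpose on system $X$. The diamond norm of a Hermitian-preserving map $\mathcal{P}_{C\to D}$ is $\sup_\psi\|(\mathrm{id}_R\otimes\mathcal{P})(\psi_{RC})\|_1$ over pure states. For a bipartite map $\mathcal{N}_{A'B'\to AB}$ (Alice: $A',A$; Bob: $B',B$), $E_N(\mathcal{N})=\log\|T_B\circ\mathcal{N}\circ T_{B'}\|_\diamond$. A bipartite channel is completely PPT-preserving if conjugating it by partial transposes on Bob's input and output systems yields a completely positive map. In the superchannel, Alice holds $A',\hat A',A_M,\hat A,A$ and Bob holds $B',\hat B',B_M,\hat B,B$. *)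

theory Defs
  imports Complex_Main
begin

text \<open>Operators on a finite-dimensional Hilbert space with orthonormal basis indexed by
  the finite type 'x are represented as matrices 'x => 'x => complex.  A composite
  system X Y is indexed by the product type 'x * 'y (tensor product).\<close>

type_synonym 'x qop = "'x \<Rightarrow> 'x \<Rightarrow> complex"

definition mmult :: "('x::finite) qop \<Rightarrow> 'x qop \<Rightarrow> 'x qop" where
  "mmult X Y = (\<lambda>i j. \<Sum>k\<in>UNIV. X i k * Y k j)"

definition adj :: "'x qop \<Rightarrow> 'x qop" where
  "adj X = (\<lambda>i j. cnj (X j i))"

definition qtrace :: "('x::finite) qop \<Rightarrow> complex" where
  "qtrace X = (\<Sum>i\<in>UNIV. X i i)"

definition psd_on :: "'x set \<Rightarrow> 'x qop \<Rightarrow> bool" where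
  "psd_on S X \<longleftrightarrow> (\<forall>v :: 'x \<Rightarrow> complex.
      (\<Sum>i\<in>S. \<Sum>j\<in>S. cnj (v i) * X i j * v j) \<in> \<real> \<and>
      0 \<le> Re (\<Sum>i\<in>S. \<Sum>j\<in>S. cnj (v i) * X i j * v j))"

definition psd :: "('x::finite) qop \<Rightarrow> bool" where
  "psd X \<longleftrightarrow> psd_on UNIV X"

definition abs_op :: "('x::finite) qop \<Rightarrow> 'x qop" where
  "abs_op X = (THE S. psd S \<and> mmult S S = mmult (adj X) X)"

definition trace_norm :: "('x::finite) qop \<Rightarrow> real" where
  "trace_norm X = Re (qtrace (abs_op X))"

text \<open>Partial transpose on Bob's (second) tensor factor.\<close>
definition ptrans :: "('x \<times> 'y) qop \<Rightarrow> ('x \<times> 'y) qop" where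
  "ptrans X = (\<lambda>(x, y) (x', y'). X (x, y') (x', y))"

definition id_tensor :: "('x qop \<Rightarrow> 'y qop) \<Rightarrow> ('r \<times> 'x) qop \<Rightarrow> ('r \<times> 'y) qop" where
  "id_tensor \<Phi> X = (\<lambda>(r, y) (r', y'). \<Phi> (\<lambda>x x'. X (r, x) (r', x')) y y')"

definition linear_qmap :: "('x qop \<Rightarrow> 'y qop) \<Rightarrow> bool" where
  "linear_qmap \<Phi> \<longleftrightarrow>
     (\<forall>X Y. \<Phi> (\<lambda>i j. X i j + Y i j) = (\<lambda>i j. \<Phi> X i j + \<Phi> Y i j)) \<and>
     (\<forall>(c::complex) X. \<Phi> (\<lambda>i j. c * X i j) = (\<lambda>i j. c * \<Phi> X i j))"

text \<open>Complete positivity: id_n tensor Phi is positive for every ancilla dimension n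
  (ancilla basis {..<n} of nat).\<close>
definition cp_map :: "(('x::finite) qop \<Rightarrow> ('y::finite) qop) \<Rightarrow> bool" where
  "cp_map \<Phi> \<longleftrightarrow> (\<forall>(n::nat) (X :: (nat \<times> 'x) qop).
      psd_on ({..<n} \<times> UNIV) X \<longrightarrow> psd_on ({..<n} \<times> UNIV) (id_tensor \<Phi> X))"

definition tp_map :: "(('x::finite) qop \<Rightarrow> ('y::finite) qop) \<Rightarrow> bool" where
  "tp_map \<Phi> \<longleftrightarrow> (\<forall>X. qtrace (\<Phi> X) = qtrace X)"

definition quantum_channel :: "(('x::finite) qop \<Rightarrow> ('y::finite) qop) \<Rightarrow> bool" where
  "quantum_channel \<Phi> \<longleftrightarrow> linear_qmap \<Phi> \<and> cp_map \<Phi> \<and> tp_map \<Phi>"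

definition diamond_norm :: "(('c::finite) qop \<Rightarrow> ('d::finite) qop) \<Rightarrow> real" where
  "diamond_norm \<Phi> = Sup {trace_norm (id_tensor \<Phi> (\<lambda>a b. \<psi> a * cnj (\<psi> b))) |
      \<psi> :: 'c \<times> 'c \<Rightarrow> complex. (\<Sum>k\<in>UNIV. (cmod (\<psi> k))\<^sup>2) = 1}"

text \<open>Bipartite map N_{A'B' -> AB}: input indexed by 'a1 * 'b1 (Alice A', Bob B'),
  output by 'a2 * 'b2 (Alice A, Bob B).\<close>
definition pt_conj :: "(('a1 \<times> 'b1) qop \<Rightarrow> ('a2 \<times> 'b2) qop) \<Rightarrow> ('a1 \<times> 'b1) qop \<Rightarrow> ('a2 \<times> 'b2) qop" where
  "pt_conj \<Phi> = (\<lambda>X. ptrans (\<Phi> (ptrans X)))"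

definition log_neg :: "((('a1::finite) \<times> ('b1::finite)) qop \<Rightarrow> (('a2::finite) \<times> ('b2::finite)) qop) \<Rightarrow> real" where
  "log_neg \<Phi> = log 2 (diamond_norm (pt_conj \<Phi>))"

definition cppt_channel :: "((('a1::finite) \<times> ('b1::finite)) qop \<Rightarrow> (('a2::finite) \<times> ('b2::finite)) qop) \<Rightarrow> bool" where
  "cppt_channel \<Phi> \<longleftrightarrow> quantum_channel \<Phi> \<and> cp_map (pt_conj \<Phi>)"

text \<open>M_{hat A' hat B' -> hat A hat B} tensor id_{A_M B_M}, with Alice's systems grouped
  as (hat A', A_M), Bob's as (hat B', B_M).\<close>
definition ext_mem :: "(('ai \<times> 'bi) qop \<Rightarrow> ('ao \<times> 'bo) qop) \<Rightarrow>
    (('ai \<times> 'am) \<times> ('bi \<times> 'bm)) qop \<Rightarrow> (('ao \<times> 'am) \<times> ('bo \<times> 'bm)) qop" where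
  "ext_mem M X = (\<lambda>((a, m), (b, n)) ((a2, m2), (b2, n2)).
      M (\<lambda>(a', b') (a'', b''). X ((a', m), (b', n)) ((a'', m2), (b'', n2))) (a, b) (a2, b2))"

definition superchannel_apply where
  "superchannel_apply Ppost Ppre M = Ppost \<circ> ext_mem M \<circ> Ppre"

end

theory Submission
  imports Defs "HOL-Analysis.Analysis"
begin

text \<open>Conjugating by Bob's partial transposes turns the processed channel into
  A \<circ> (N \<otimes> id) \<circ> C with N = T_B \<circ> M \<circ> T_B' and A, C the partially transposed pre- and
  post-processing, which are genuine channels because these maps are completely PPT-preserving.
  The channel C turns a pure input into a state on the inputs of N, the memory and a reference;
  by convexity of the trace norm it suffices to bound pure such states, and a polar decomposition
  compresses the reference together with the memory to a copy of the input of N at the cost of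
  a contraction, so the trace norm after N \<otimes> id is at most the diamond norm of N.  The channel A
  does not increase the trace norm of Hermitian operators.  Finally the composite is trace and
  hermiticity preserving, so its diamond norm is at least 1 and the logarithm is monotone on
  both sides.\<close>

section \<open>Matrices as functions\<close>

text \<open>Rectangular versions of mmult and adj; the polar decomposition needs non-square factors.\<close>

definition mat_mult :: "('i \<Rightarrow> 'k::finite \<Rightarrow> complex) \<Rightarrow> ('k \<Rightarrow> 'j \<Rightarrow> complex) \<Rightarrow> 'i \<Rightarrow> 'j \<Rightarrow> complex"
  where "mat_mult A B = (\<lambda>i j. \<Sum>k\<in>UNIV. A i k * B k j)"
definition mat_adj :: "('i \<Rightarrow> 'j \<Rightarrow> complex) \<Rightarrow> 'j \<Rightarrow> 'i \<Rightarrow> complex"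
  where "mat_adj A = (\<lambda>i j. cnj (A j i))"
definition id_mat :: "'x \<Rightarrow> 'x \<Rightarrow> complex" where "id_mat = (\<lambda>i j. if i = j then 1 else 0)"
definition hermitian :: "('x \<Rightarrow> 'x \<Rightarrow> complex) \<Rightarrow> bool" where "hermitian X \<longleftrightarrow> mat_adj X = X"
definition unitary :: "('x::finite) qop \<Rightarrow> bool" where
  "unitary U \<longleftrightarrow> mat_mult (mat_adj U) U = id_mat \<and> mat_mult U (mat_adj U) = id_mat"
definition unitary_diag :: "('x::finite \<Rightarrow> 'x \<Rightarrow> complex) \<Rightarrow> ('x \<Rightarrow> real) \<Rightarrow> 'x qop" where
  "unitary_diag U d = (\<lambda>i j. \<Sum>k\<in>UNIV. U i k * complex_of_real (d k) * cnj (U j k))"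
definition cinner :: "('x::finite \<Rightarrow> complex) \<Rightarrow> ('x \<Rightarrow> complex) \<Rightarrow> complex" where
  "cinner u v = (\<Sum>i\<in>UNIV. cnj (u i) * v i)"
definition mat_vec :: "('i \<Rightarrow> 'k::finite \<Rightarrow> complex) \<Rightarrow> ('k \<Rightarrow> complex) \<Rightarrow> 'i \<Rightarrow> complex" where
  "mat_vec A v = (\<lambda>i. \<Sum>k\<in>UNIV. A i k * v k)"

lemma if01_mult[simp]: "(if P then 1 else 0) * (b::complex) = (if P then b else 0)" by simp
lemma mult_if01[simp]: "(b::complex) * (if P then 1 else 0) = (if P then b else 0)" by simp
lemma cnj_if01[simp]: "cnj (if P then 1 else 0) = (if P then 1 else 0)" by simp
lemma if_0_mult: "(if P then a else 0) * b = (if P then a * b else (0::complex))" by simp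
lemma mult_if_0: "b * (if P then a else 0) = (if P then b * a else (0::complex))" by simp
lemma cnj_if0: "cnj (if P then x else 0) = (if P then cnj x else 0)" by simp

lemma sum_prod_UNIV: "(\<Sum>x\<in>(UNIV::('a::finite \<times> 'b::finite) set). f x) = (\<Sum>a\<in>UNIV. \<Sum>b\<in>UNIV. f (a, b))"
  unfolding sum.cartesian_product by simp

lemma sum_reindex_bij: "bij (\<pi> :: 'a::finite \<Rightarrow> 'b::finite) \<Longrightarrow> (\<Sum>i\<in>UNIV. f (\<pi> i)) = (\<Sum>a\<in>UNIV. f a)"
  by (rule sum.reindex_bij_betw) (simp add: bij_def bij_betw_def)

lemma adj_eq_mat_adj: "adj = mat_adj" by (auto simp: adj_def mat_adj_def fun_eq_iff)
lemma mmult_eq_mat_mult: "mmult = mat_mult" by (auto simp: mmult_def mat_mult_def fun_eq_iff)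

lemma mat_mult_assoc: "mat_mult (mat_mult A B) C = mat_mult A (mat_mult B C)"
  by (auto simp: mat_mult_def fun_eq_iff sum_distrib_left sum_distrib_right mult.assoc intro: sum.swap)

lemma mat_adj_mult: "mat_adj (mat_mult A B) = mat_mult (mat_adj B) (mat_adj A)"
  by (auto simp: mat_mult_def mat_adj_def fun_eq_iff mult.commute)

lemma mat_adj_adj[simp]: "mat_adj (mat_adj A) = A" by (auto simp: mat_adj_def)

lemma mat_mult_id_left[simp]: "mat_mult id_mat A = A"
  by (auto simp: mat_mult_def id_mat_def fun_eq_iff)
lemma mat_mult_id_right[simp]: "mat_mult A id_mat = A"
  by (auto simp: mat_mult_def id_mat_def fun_eq_iff)

lemma mat_adj_id[simp]: "mat_adj id_mat = id_mat" by (auto simp: mat_adj_def id_mat_def fun_eq_iff)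

lemma qtrace_mat_mult_commute: "qtrace (mat_mult A B) = qtrace (mat_mult B A)"
  unfolding qtrace_def mat_mult_def by (subst sum.swap) (simp add: mult.commute)

lemma mat_vec_mult: "mat_vec (mat_mult A B) v = mat_vec A (mat_vec B v)"
  by (auto simp: mat_vec_def mat_mult_def fun_eq_iff sum_distrib_left sum_distrib_right mult.assoc intro: sum.swap)

lemma cinner_mat_vec: "cinner u (mat_vec A v) = cinner (mat_vec (mat_adj A) u) v"
  by (auto simp: cinner_def mat_vec_def mat_adj_def sum_distrib_left sum_distrib_right mult_ac intro: sum.swap)

lemma quadratic_form_eq_cinner: "(\<Sum>i\<in>UNIV. \<Sum>j\<in>UNIV. cnj (v i) * X i j * v j) = cinner v (mat_vec X v)"
  by (simp add: cinner_def mat_vec_def sum_distrib_left mult.assoc)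

lemma psd_iff: "psd X \<longleftrightarrow> (\<forall>v. cinner v (mat_vec X v) \<in> \<real> \<and> 0 \<le> Re (cinner v (mat_vec X v)))"
  by (simp add: psd_def psd_on_def quadratic_form_eq_cinner)

lemma cinner_self: "cinner v v = complex_of_real (\<Sum>i\<in>UNIV. (cmod (v i))\<^sup>2)"
proof -
  have e: "cnj (v i) * v i = complex_of_real ((cmod (v i))\<^sup>2)" for i
    by (subst complex_norm_square) (rule mult.commute)
  show ?thesis unfolding cinner_def of_real_sum by (intro sum.cong refl e)
qed

lemma cinner_self_Re: "Re (cinner v v) = (\<Sum>i\<in>UNIV. (cmod (v i))\<^sup>2)"
  by (simp add: cinner_self)

lemma cinner_self_nonneg: "0 \<le> Re (cinner v v)"
  by (simp add: cinner_self_Re sum_nonneg)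

lemma cinner_self_eq_0: "Re (cinner v v) = 0 \<Longrightarrow> v = (\<lambda>_. 0)"
proof -
  assume "Re (cinner v v) = 0"
  hence "(\<Sum>i\<in>UNIV. (cmod (v i))\<^sup>2) = 0" by (simp add: cinner_self_Re)
  hence "\<forall>i\<in>UNIV. (cmod (v i))\<^sup>2 = 0" by (subst (asm) sum_nonneg_eq_0_iff) auto
  thus ?thesis by auto
qed

lemma cnj_cinner: "cnj (cinner u v) = cinner v u"
  by (simp add: cinner_def mult.commute)

lemma hermitian_cinner_cnj: "hermitian A \<Longrightarrow> cinner u (mat_vec A v) = cnj (cinner v (mat_vec A u))"
  by (metis cinner_mat_vec cnj_cinner hermitian_def)

lemma hermitian_quadratic_form_real: "hermitian A \<Longrightarrow> cinner v (mat_vec A v) \<in> \<real>"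
  using hermitian_cinner_cnj[of A v v] by (metis Reals_cnj_iff)

lemma quadratic_form_add_scaled:
  fixes t :: real and u v :: "'x::finite \<Rightarrow> complex"
  shows "cinner (\<lambda>i. v i + t * u i) (mat_vec A (\<lambda>i. v i + t * u i)) =
     cinner v (mat_vec A v) + t * (cinner v (mat_vec A u) + cinner u (mat_vec A v)) + t\<^sup>2 * cinner u (mat_vec A u)"
  by (simp add: cinner_def mat_vec_def algebra_simps sum.distrib sum_distrib_left power2_eq_square)

lemma nonneg_quadratic_linear_coeff_zero:
  fixes b c :: real
  assumes "\<And>t. 0 \<le> 2*t*b + t\<^sup>2*c"
  shows "b = 0"
proof (rule ccontr)
  assume b: "b \<noteq> 0"
  define t where "t = - b / (\<bar>c\<bar> + 1)"
  have p: "\<bar>c\<bar> + 1 > 0" by simp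
  have "t\<^sup>2 * c \<le> t\<^sup>2 * \<bar>c\<bar>" by (simp add: mult_left_mono)
  also have "\<dots> = b\<^sup>2 * \<bar>c\<bar> / (\<bar>c\<bar> + 1)\<^sup>2" by (simp add: t_def power_divide)
  also have "\<dots> \<le> b\<^sup>2 / (\<bar>c\<bar> + 1)"
  proof -
    have "b\<^sup>2 * \<bar>c\<bar> \<le> b\<^sup>2 * (\<bar>c\<bar> + 1)" by (simp add: mult_left_mono)
    hence "b\<^sup>2 * \<bar>c\<bar> / (\<bar>c\<bar> + 1)\<^sup>2 \<le> b\<^sup>2 * (\<bar>c\<bar> + 1) / (\<bar>c\<bar> + 1)\<^sup>2"
      by (simp add: divide_right_mono)
    also have "\<dots> = b\<^sup>2 / (\<bar>c\<bar> + 1)" using p by (simp add: power2_eq_square)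
    finally show ?thesis .
  qed
  finally have 1: "t\<^sup>2 * c \<le> b\<^sup>2 / (\<bar>c\<bar> + 1)" .
  have 2: "2*t*b = - 2 * b\<^sup>2 / (\<bar>c\<bar> + 1)" by (simp add: t_def power2_eq_square)
  have "b\<^sup>2 / (\<bar>c\<bar> + 1) > 0" using b p by simp
  with 1 2 assms[of t] show False by linarith
qed

section \<open>The spectral theorem\<close>

definition supported_on :: "'x set \<Rightarrow> ('x \<Rightarrow> complex) \<Rightarrow> bool" where
  "supported_on I v \<longleftrightarrow> (\<forall>i. i \<notin> I \<longrightarrow> v i = 0)"

definition id_outside :: "'x set \<Rightarrow> ('x \<Rightarrow> 'x \<Rightarrow> complex) \<Rightarrow> bool" where
  "id_outside I A \<longleftrightarrow> (\<forall>i j. i \<notin> I \<or> j \<notin> I \<longrightarrow> A i j = id_mat i j)"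
definition zero_outside :: "'x set \<Rightarrow> ('x \<Rightarrow> 'x \<Rightarrow> complex) \<Rightarrow> bool" where
  "zero_outside I A \<longleftrightarrow> (\<forall>i j. i \<notin> I \<or> j \<notin> I \<longrightarrow> A i j = 0)"

lemma psd_on_support_null_vector:
  assumes h: "hermitian A"
    and pos: "\<And>w. supported_on I w \<Longrightarrow> 0 \<le> Re (cinner w (mat_vec A w))"
    and v: "supported_on I v" and u: "supported_on I u" and z: "cinner v (mat_vec A v) = 0"
  shows "Re (cinner u (mat_vec A v)) = 0"
proof -
  have "0 \<le> 2*t*Re (cinner u (mat_vec A v)) + t\<^sup>2 * Re (cinner u (mat_vec A u))" for t :: real
  proof -
    have s: "supported_on I (\<lambda>i. v i + complex_of_real t * u i)" using u v by (simp add: supported_on_def)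
    have e: "cinner v (mat_vec A u) + cinner u (mat_vec A v) = 2 * Re (cinner u (mat_vec A v))"
      using hermitian_cinner_cnj[OF h, of v u] by (simp add: complex_eq_iff)
    have "0 \<le> Re (cinner (\<lambda>i. v i + t * u i) (mat_vec A (\<lambda>i. v i + t * u i)))" using pos[OF s] .
    also have "\<dots> = 2*t*Re (cinner u (mat_vec A v)) + t\<^sup>2 * Re (cinner u (mat_vec A u))"
      using quadratic_form_add_scaled[of v t u A] z e by simp
    finally show ?thesis .
  qed
  thus ?thesis by (rule nonneg_quadratic_linear_coeff_zero)
qed

lemma norm_vec_square: "(norm (x::complex^'n))\<^sup>2 = (\<Sum>i\<in>UNIV. (cmod (x$i))\<^sup>2)"
  by (simp add: norm_vec_def L2_set_def sum_nonneg)

lemma cinner_vec_nth: "cinner (vec_nth x) (vec_nth x) = complex_of_real ((norm (x::complex^'n))\<^sup>2)"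
  by (simp add: cinner_self norm_vec_square)

lemma rayleigh_quotient_max_exists:
  fixes H :: "'x::finite qop"
  assumes i0: "i0 \<in> I"
  shows "\<exists>v. supported_on I v \<and> cinner v v = 1 \<and>
     (\<forall>w. supported_on I w \<and> cinner w w = 1 \<longrightarrow> Re (cinner w (mat_vec H w)) \<le> Re (cinner v (mat_vec H v)))"
proof -
  let ?K = "{x::complex^'x. (\<forall>i. i \<notin> I \<longrightarrow> x$i = 0) \<and> norm x = 1}"
  let ?f = "\<lambda>x::complex^'x. Re (cinner (vec_nth x) (mat_vec H (vec_nth x)))"
  have Keq: "?K = (\<Inter>i\<in>-I. {x. x$i = 0}) \<inter> sphere 0 1" by auto
  have "closed ?K" unfolding Keq
    by (intro closed_Int closed_INT closed_sphere ballI closed_Collect_eq continuous_intros)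
  moreover have "bounded ?K" by (rule bounded_subset[OF bounded_cball[of 0 1]]) auto
  ultimately have cK: "compact ?K" by (simp add: compact_eq_bounded_closed)
  define e where "e = (\<chi> j. if j = i0 then (1::complex) else 0)"
  have "(norm e)\<^sup>2 = 1" unfolding norm_vec_square e_def
    by (simp add: if_distrib[of "\<lambda>z. (cmod z)\<^sup>2"] cong: if_cong)
  hence "norm e = 1" using norm_ge_zero[of e] by (auto simp: power2_eq_1_iff)
  hence "e \<in> ?K" using i0 by (auto simp: e_def)
  hence ne: "?K \<noteq> {}" by auto
  have cf: "continuous_on ?K ?f"
    unfolding cinner_def mat_vec_def by (intro continuous_intros)
  obtain x where xK: "x \<in> ?K" and xm: "\<And>y. y \<in> ?K \<Longrightarrow> ?f y \<le> ?f x"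
    using continuous_attains_sup[OF cK ne cf] by blast
  show ?thesis
  proof (intro exI conjI allI impI)
    show "supported_on I (vec_nth x)" using xK by (simp add: supported_on_def)
    show "cinner (vec_nth x) (vec_nth x) = 1" using xK by (simp add: cinner_vec_nth)
    fix w assume w: "supported_on I w \<and> cinner w w = 1"
    have "vec_lambda w \<in> ?K"
    proof -
      have vw: "vec_nth (vec_lambda w) = w" by (simp add: fun_eq_iff)
      have "cinner (vec_nth (vec_lambda w)) (vec_nth (vec_lambda w)) = 1" using w by (simp add: vw)
      hence "(norm (vec_lambda w))\<^sup>2 = 1" by (simp only: cinner_vec_nth of_real_eq_1_iff)
      hence "norm (vec_lambda w) = 1" using norm_ge_zero[of "vec_lambda w"] by (auto simp: power2_eq_1_iff)
      thus ?thesis using w by (simp add: supported_on_def)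
    qed
    from xm[OF this] have vw: "vec_nth (vec_lambda w) = w" by (simp add: fun_eq_iff)
    from xm[OF \<open>vec_lambda w \<in> ?K\<close>] show "Re (cinner w (mat_vec H w)) \<le> Re (cinner (vec_nth x) (mat_vec H (vec_nth x)))" by (simp add: vw)
  qed
qed

lemma mat_vec_scale: "mat_vec A (\<lambda>i. c * v i) = (\<lambda>i. c * mat_vec A v i)"
  by (simp add: mat_vec_def sum_distrib_left mult_ac)
lemma cinner_scale_left: "cinner (\<lambda>i. c * u i) v = cnj c * cinner u v"
  by (simp add: cinner_def sum_distrib_left mult_ac)
lemma cinner_scale_right: "cinner u (\<lambda>i. c * v i) = c * cinner u v"
  by (simp add: cinner_def sum_distrib_left mult_ac)
lemma cinner_diff_right: "cinner u (\<lambda>i. a i - b i) = cinner u a - cinner u b"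
  by (simp add: cinner_def sum_subtractf right_diff_distrib)
lemma mat_vec_shift: "mat_vec (\<lambda>i j. c * id_mat i j - H i j) v = (\<lambda>i. c * v i - mat_vec H v i)"
  by (simp add: mat_vec_def id_mat_def sum_subtractf left_diff_distrib if_0_mult fun_eq_iff)

lemma hermitian_entry: "hermitian H \<Longrightarrow> cnj (H j i) = H i j"
  unfolding hermitian_def mat_adj_def by (drule fun_cong[where x=i], drule fun_cong[where x=j]) simp

lemma hermitian_shift: assumes "hermitian H" shows "hermitian (\<lambda>i j. complex_of_real l * id_mat i j - H i j)"
proof -
  have e: "cnj (H j i) = H i j" for i j by (rule hermitian_entry[OF assms])
  show ?thesis unfolding hermitian_def mat_adj_def id_mat_def by (auto simp: fun_eq_iff e)
qed

lemma quadratic_form_le_scaled_max: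
  assumes mx: "\<And>w. supported_on I w \<Longrightarrow> cinner w w = 1 \<Longrightarrow> Re (cinner w (mat_vec H w)) \<le> l"
    and sw: "supported_on I w"
  shows "Re (cinner w (mat_vec H w)) \<le> l * Re (cinner w w)"
proof (cases "Re (cinner w w) = 0")
  case True
  hence "w = (\<lambda>_. 0)" by (rule cinner_self_eq_0)
  thus ?thesis by (simp add: cinner_def mat_vec_def)
next
  case False
  define n where "n = Re (cinner w w)"
  have npos: "n > 0" using False cinner_self_nonneg[of w] unfolding n_def by linarith
  have cw: "cinner w w = n" unfolding n_def using cinner_self[of w] by simp
  define w1 where "w1 = (\<lambda>i. complex_of_real (1 / sqrt n) * w i)"
  have cc: "cnj (complex_of_real (1 / sqrt n)) * complex_of_real (1 / sqrt n) = complex_of_real (1 / n)"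
    using npos by (simp flip: of_real_mult add: divide_simps)
  have "supported_on I w1" using sw by (simp add: supported_on_def w1_def)
  moreover have "cinner w1 w1 = 1"
    unfolding w1_def cinner_scale_left cinner_scale_right cw mult.assoc[symmetric] cc using npos
    by (simp flip: of_real_mult)
  ultimately have "Re (cinner w1 (mat_vec H w1)) \<le> l" by (rule mx)
  moreover have "cinner w1 (mat_vec H w1) = cinner w (mat_vec H w) / n"
    unfolding w1_def mat_vec_scale cinner_scale_left cinner_scale_right mult.assoc[symmetric] cc
    by (simp add: divide_inverse mult.commute)
  ultimately show ?thesis using npos by (simp add: divide_le_eq n_def mult.commute)
qed

text \<open>The maximizer v of the Rayleigh quotient with value l is an eigenvector: l I - H is
  positive semidefinite on the support and annihilates v in its quadratic form.\<close>

lemma eigenvector_exists_on_support: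
  fixes H :: "'x::finite qop"
  assumes h: "hermitian H" and sH: "zero_outside I H" and i0: "i0 \<in> I"
  shows "\<exists>v (l::real). supported_on I v \<and> cinner v v = 1 \<and> mat_vec H v = (\<lambda>i. l * v i)"
proof -
  obtain v where sv: "supported_on I v" and nv: "cinner v v = 1"
    and mx: "\<And>w. supported_on I w \<Longrightarrow> cinner w w = 1 \<Longrightarrow> Re (cinner w (mat_vec H w)) \<le> Re (cinner v (mat_vec H v))"
    using rayleigh_quotient_max_exists[OF i0, of H] by blast
  define l where "l = Re (cinner v (mat_vec H v))"
  define A where "A = (\<lambda>i j. complex_of_real l * id_mat i j - H i j)"
  have hA: "hermitian A" unfolding A_def by (rule hermitian_shift[OF h])
  have qA: "cinner w (mat_vec A w) = l * cinner w w - cinner w (mat_vec H w)" for w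
    unfolding A_def mat_vec_shift cinner_diff_right cinner_scale_right ..
  have pos: "0 \<le> Re (cinner w (mat_vec A w))" if "supported_on I w" for w
    using quadratic_form_le_scaled_max[of I H l w] mx that unfolding qA l_def
    by (simp add: cinner_self)
  have real: "cinner v (mat_vec H v) = l" unfolding l_def using hermitian_quadratic_form_real[OF h, of v]
    by (simp add: complex_eq_iff Reals_def)
  have z: "cinner v (mat_vec A v) = 0" unfolding qA nv real by simp
  have su: "supported_on I (mat_vec A v)" unfolding A_def mat_vec_shift
    using sv sH by (simp add: supported_on_def mat_vec_def zero_outside_def)
  have "Re (cinner (mat_vec A v) (mat_vec A v)) = 0" by (rule psd_on_support_null_vector[OF hA pos sv su z])
  hence "mat_vec A v = (\<lambda>_. 0)" by (rule cinner_self_eq_0)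
  hence "mat_vec H v = (\<lambda>i. l * v i)" unfolding A_def mat_vec_shift by (auto simp: fun_eq_iff dest: fun_cong)
  thus ?thesis using sv nv by blast
qed

definition diag_mat :: "('x \<Rightarrow> real) \<Rightarrow> 'x \<Rightarrow> 'x \<Rightarrow> complex" where
  "diag_mat d = (\<lambda>i j. if i = j then complex_of_real (d i) else 0)"

lemma unitary_diag_eq_mat_mult: "unitary_diag U d = mat_mult (mat_mult U (diag_mat d)) (mat_adj U)"
  by (simp add: unitary_diag_def mat_mult_def diag_mat_def mat_adj_def fun_eq_iff mult_if_0 if_0_mult)

lemma mat_adj_diag_mat[simp]: "mat_adj (diag_mat d) = diag_mat d" by (auto simp: mat_adj_def diag_mat_def fun_eq_iff)

lemma unitary_diag_conj: "mat_mult A (mat_mult (unitary_diag U d) (mat_adj A)) = unitary_diag (mat_mult A U) d"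
  by (simp add: unitary_diag_eq_mat_mult mat_mult_assoc mat_adj_mult)

lemma hermitian_unitary_diag: "hermitian (unitary_diag U d)"
  by (simp add: hermitian_def unitary_diag_eq_mat_mult mat_adj_mult mat_mult_assoc)

lemma unitary_id: "unitary id_mat" by (simp add: unitary_def)

lemma unitary_mat_mult: "unitary A \<Longrightarrow> unitary B \<Longrightarrow> unitary (mat_mult A B)"
  unfolding unitary_def mat_adj_mult
  by (metis mat_mult_assoc mat_mult_id_left)

lemma mat_vec_id[simp]: "mat_vec id_mat v = v" by (simp add: mat_vec_def id_mat_def)

lemma unitary_diag_id_zero: "unitary_diag id_mat (\<lambda>_. 0) = (\<lambda>_ _. 0)"
  by (simp add: unitary_diag_def)

lemma mat_mult_id_minus_square:
  "mat_mult (\<lambda>i j. id_mat i j - c * P i j) (\<lambda>i j. id_mat i j - c * P i j)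
   = (\<lambda>i j. id_mat i j - 2 * c * P i j + c * c * mat_mult P P i j)"
proof -
  have e: "(id_mat i k - c * P i k) * (id_mat k j - c * P k j) =
     id_mat i k * id_mat k j - c * (id_mat i k * P k j) - c * (P i k * id_mat k j) + (c * c) * (P i k * P k j)"
    for i j k by (simp add: algebra_simps)
  show ?thesis
    unfolding mat_mult_def e
    by (simp add: fun_eq_iff sum.distrib sum_subtractf sum_distrib_left[symmetric] id_mat_def if_0_mult mult_if_0)
qed

definition householder :: "('x::finite \<Rightarrow> complex) \<Rightarrow> 'x qop" where
  "householder w = (\<lambda>i j. id_mat i j - 2 * w i * cnj (w j) / cinner w w)"

lemma hermitian_householder: "hermitian (householder w)"
proof -
  have "cnj (cinner w w) = cinner w w" by (rule cnj_cinner)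
  thus ?thesis by (simp add: hermitian_def householder_def mat_adj_def fun_eq_iff id_mat_def mult.commute)
qed

lemma householder_involution:
  assumes "cinner w w \<noteq> 0"
  shows "mat_mult (householder w) (householder w) = id_mat"
proof -
  define P where "P = (\<lambda>i j. w i * cnj (w j))"
  have QP: "householder w = (\<lambda>i j. id_mat i j - (2 / cinner w w) * P i j)"
    by (simp add: householder_def P_def fun_eq_iff)
  have "(\<Sum>k\<in>UNIV. w i * cnj (w k) * (w k * cnj (w j))) = w i * cnj (w j) * cinner w w" for i j
    by (simp add: cinner_def sum_distrib_left mult_ac)
  hence PP: "mat_mult P P = (\<lambda>i j. cinner w w * P i j)"
    unfolding mat_mult_def P_def by (simp add: fun_eq_iff mult_ac)
  show ?thesis
    unfolding QP mat_mult_id_minus_square PP using assms by (simp add: fun_eq_iff field_simps)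
qed

lemma householder_reflection_exists:
  fixes v :: "'x::finite \<Rightarrow> complex"
  assumes sv: "supported_on I v" and nv: "cinner v v = 1" and i0: "i0 \<in> I"
    and vr: "v i0 = complex_of_real a" and a0: "0 \<le> a"
  shows "\<exists>Q. hermitian Q \<and> mat_mult Q Q = id_mat \<and> id_outside I Q
           \<and> mat_vec Q (\<lambda>j. id_mat j i0) = v"
proof -
  define e where "e = (\<lambda>j. id_mat j i0)"
  define w where "w = (\<lambda>j. v j - e j)"
  show ?thesis
  proof (cases "cinner w w = 0")
    case True
    hence "w = (\<lambda>_. 0)" by (intro cinner_self_eq_0) simp
    hence "v = e" unfolding w_def by (auto simp: fun_eq_iff dest: fun_cong)
    thus ?thesis
      by (intro exI[of _ id_mat]) (simp add: hermitian_def e_def id_outside_def)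
  next
    case False
    have en: "cinner e e = 1" and ev: "cinner e v = v i0" by (simp_all add: cinner_def e_def id_mat_def)
    have cw: "cinner w w = 2 - 2 * a"
      unfolding w_def cinner_diff_right cinner_def[of "\<lambda>j. v j - e j"] using nv en ev
      by (simp add: cinner_def sum_subtractf left_diff_distrib vr e_def id_mat_def)
    have wi0: "w i0 = complex_of_real (a - 1)" by (simp add: w_def e_def id_mat_def vr)
    have "mat_vec (householder w) e = (\<lambda>i. e i - 2 * w i * cnj (w i0) / cinner w w)"
      by (simp add: mat_vec_def householder_def e_def id_mat_def fun_eq_iff if_0_mult mult_if_0 cong: if_cong)
    also have "\<dots> = (\<lambda>i. e i + w i)"
      using False unfolding cw wi0 by (simp add: fun_eq_iff field_simps)
    also have "\<dots> = v" by (simp add: w_def)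
    finally have "mat_vec (householder w) e = v" .
    moreover have "supported_on I w" using sv i0 by (auto simp: supported_on_def w_def e_def id_mat_def)
    hence "id_outside I (householder w)" by (auto simp: householder_def supported_on_def id_outside_def)
    ultimately show ?thesis using hermitian_householder householder_involution[OF False]
      unfolding e_def by blast
  qed
qed

lemma id_outside_mat_mult: "id_outside I A \<Longrightarrow> id_outside I B \<Longrightarrow> id_outside I (mat_mult (A::'x::finite qop) B)"
proof -
  assume a: "id_outside I A" and b: "id_outside I B"
  have "mat_mult A B i j = id_mat i j" if "i \<notin> I \<or> j \<notin> I" for i j
  proof (cases "i \<notin> I")
    case True
    hence "mat_mult A B i j = mat_mult id_mat B i j" using a by (simp add: id_outside_def mat_mult_def)
    thus ?thesis using b True by (simp add: id_outside_def)
  next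
    case False
    hence j: "j \<notin> I" using that by simp
    hence "mat_mult A B i j = mat_mult A id_mat i j" using b by (simp add: id_outside_def mat_mult_def)
    thus ?thesis using a j by (simp add: id_outside_def)
  qed
  thus ?thesis by (simp add: id_outside_def)
qed

lemma zero_outside_mult_id_outside: "zero_outside I H \<Longrightarrow> id_outside I A \<Longrightarrow> zero_outside I (mat_mult (H::'x::finite qop) A)"
proof -
  assume a: "zero_outside I H" and b: "id_outside I A"
  have "mat_mult H A i j = 0" if "i \<notin> I \<or> j \<notin> I" for i j
  proof (cases "i \<notin> I")
    case True thus ?thesis using a by (simp add: zero_outside_def mat_mult_def)
  next
    case False
    hence j: "j \<notin> I" using that by simp
    hence "mat_mult H A i j = mat_mult H id_mat i j" using b by (simp add: id_outside_def mat_mult_def)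
    thus ?thesis using a j by (simp add: zero_outside_def)
  qed
  thus ?thesis by (simp add: zero_outside_def)
qed

lemma id_outside_mult_zero_outside: "zero_outside I H \<Longrightarrow> id_outside I A \<Longrightarrow> zero_outside I (mat_mult A (H::'x::finite qop))"
proof -
  assume a: "zero_outside I H" and b: "id_outside I A"
  have "mat_mult A H i j = 0" if "i \<notin> I \<or> j \<notin> I" for i j
  proof (cases "j \<notin> I")
    case True thus ?thesis using a by (simp add: zero_outside_def mat_mult_def)
  next
    case False
    hence i: "i \<notin> I" using that by simp
    hence "mat_mult A H i j = mat_mult id_mat H i j" using b by (simp add: id_outside_def mat_mult_def)
    thus ?thesis using a i by (simp add: zero_outside_def)
  qed
  thus ?thesis by (simp add: zero_outside_def)
qed

lemma unitary_diag_update: "unitary_diag U (d(k := x)) i j = unitary_diag U d i j + U i k * complex_of_real (x - d k) * cnj (U j k)"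
proof -
  have e: "U i k' * complex_of_real ((d(k := x)) k') * cnj (U j k') =
        U i k' * complex_of_real (d k') * cnj (U j k') +
        (if k' = k then U i k * complex_of_real (x - d k) * cnj (U j k) else 0)" for k'
    by (simp add: algebra_simps of_real_diff)
  show ?thesis unfolding unitary_diag_def e by (simp add: sum.distrib)
qed

lemma hermitian_conj_hermitian: "hermitian H \<Longrightarrow> hermitian Q \<Longrightarrow> hermitian (mat_mult Q (mat_mult H Q))"
  unfolding hermitian_def by (simp add: mat_adj_mult mat_mult_assoc)

lemma phase_normalized_eigenvector:
  fixes H :: "'x::finite qop"
  assumes h: "hermitian H" and sH: "zero_outside I H" and i0: "i0 \<in> I"
  shows "\<exists>v (l::real) (a::real). supported_on I v \<and> cinner v v = 1 \<and>
           mat_vec H v = (\<lambda>i. l * v i) \<and> v i0 = complex_of_real a \<and> 0 \<le> a"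
proof -
  obtain v l where sv: "supported_on I v" and nv: "cinner v v = 1"
    and Hv: "mat_vec H v = (\<lambda>i. complex_of_real l * v i)"
    using eigenvector_exists_on_support[OF h sH i0] by blast
  define \<alpha> where "\<alpha> = v i0"
  define c where "c = (if \<alpha> = 0 then 1 else cnj \<alpha> / cmod \<alpha>)"
  have \<alpha>2: "\<alpha> * cnj \<alpha> = complex_of_real (cmod \<alpha> * cmod \<alpha>)"
    by (simp flip: complex_norm_square add: power2_eq_square)
  have cc: "cnj c * c = 1"
    using \<alpha>2 by (cases "\<alpha> = 0") (simp_all add: c_def)
  have ca: "c * \<alpha> = complex_of_real (cmod \<alpha>)"
    using \<alpha>2 by (cases "\<alpha> = 0") (simp_all add: c_def mult.commute)
  show ?thesis
  proof (intro exI conjI)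
    show "supported_on I (\<lambda>i. c * v i)" using sv by (simp add: supported_on_def)
    show "cinner (\<lambda>i. c * v i) (\<lambda>i. c * v i) = 1"
      unfolding cinner_scale_left cinner_scale_right nv using cc by (simp add: mult.assoc[symmetric])
    show "mat_vec H (\<lambda>i. c * v i) = (\<lambda>i. complex_of_real l * (c * v i))"
      unfolding mat_vec_scale Hv by (simp add: fun_eq_iff mult_ac)
    show "c * v i0 = complex_of_real (cmod \<alpha>)" using ca by (simp add: \<alpha>_def)
  qed simp
qed

text \<open>A Householder reflection mapping e_i0 to a phase-normalized eigenvector deflates H.\<close>

lemma deflating_reflection_exists:
  fixes H :: "'x::finite qop"
  assumes h: "hermitian H" and sH: "zero_outside I H" and i0: "i0 \<in> I"
  shows "\<exists>Q (l::real). hermitian Q \<and> mat_mult Q Q = id_mat \<and> id_outside I Q \<and>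
           (\<forall>i. mat_mult Q (mat_mult H Q) i i0 = l * id_mat i i0)"
proof -
  obtain v l a where sv: "supported_on I v" and nv: "cinner v v = 1"
    and Hv: "mat_vec H v = (\<lambda>i. complex_of_real l * v i)" and va: "v i0 = complex_of_real a" and a: "0 \<le> a"
    using phase_normalized_eigenvector[OF h sH i0] by blast
  obtain Q where hQ: "hermitian Q" and QQ: "mat_mult Q Q = id_mat" and iQ: "id_outside I Q"
    and Qe: "mat_vec Q (\<lambda>j. id_mat j i0) = v"
    using householder_reflection_exists[OF sv nv i0 va a] by blast
  have Qv: "mat_vec Q v = (\<lambda>j. id_mat j i0)" unfolding Qe[symmetric] mat_vec_mult[symmetric] QQ by simp
  have "mat_vec (mat_mult Q (mat_mult H Q)) (\<lambda>j. id_mat j i0) = (\<lambda>i. complex_of_real l * id_mat i i0)"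
    unfolding mat_vec_mult Qe Hv mat_vec_scale Qv ..
  hence "mat_mult Q (mat_mult H Q) i i0 = complex_of_real l * id_mat i i0" for i
    by (drule_tac fun_cong[where x=i]) (simp add: mat_vec_def id_mat_def if_0_mult mult_if_0)
  thus ?thesis using hQ QQ iQ by blast
qed

lemma unitary_diag_insert_eigenvalue:
  fixes H :: "'x::finite qop"
  assumes h: "hermitian H" and column: "\<And>i. H i i0 = complex_of_real l * id_mat i i0"
    and i0: "i0 \<notin> I" and U: "id_outside I U" and d: "\<forall>k. k \<notin> I \<longrightarrow> d k = 0"
    and block: "(\<lambda>i j. if i = i0 \<or> j = i0 then 0 else H i j) = unitary_diag U d"
  shows "H = unitary_diag U (d(i0 := l))"
proof (intro ext)
  fix i j
  have row: "H i0 j = complex_of_real l * id_mat i0 j"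
    using hermitian_entry[OF h, of j i0] column[of j] by (auto simp: id_mat_def)
  have Ui0: "U i i0 = id_mat i i0" for i using U i0 by (simp add: id_outside_def)
  have "unitary_diag U (d(i0 := l)) i j = unitary_diag U d i j + U i i0 * complex_of_real l * cnj (U j i0)"
    unfolding unitary_diag_update using d i0 by simp
  also have "\<dots> = H i j" unfolding Ui0 block[symmetric] using column row by (auto simp: id_mat_def)
  finally show "H i j = unitary_diag U (d(i0 := l)) i j" by simp
qed

lemma spectral_theorem_on_support:
  fixes I :: "'x::finite set"
  shows "\<forall>H. hermitian H \<and> zero_outside I H \<longrightarrow>
    (\<exists>U d. unitary U \<and> id_outside I U \<and> (\<forall>k. k \<notin> I \<longrightarrow> d k = 0) \<and> H = unitary_diag U d)"
  using finite[of I]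
proof (induction I rule: finite_induct)
  case empty
  have "H = unitary_diag id_mat (\<lambda>_. 0)" if "zero_outside {} H" for H :: "'x qop"
    using that by (auto simp: zero_outside_def unitary_diag_id_zero fun_eq_iff)
  thus ?case by (blast intro: unitary_id[unfolded id_outside_def] exI[of _ id_mat] exI[of _ "\<lambda>_. 0"] id_outside_def[THEN iffD2])
next
  case (insert i0 I')
  let ?I = "insert i0 I'"
  show ?case
  proof (intro allI impI)
    fix H :: "'x qop" assume "hermitian H \<and> zero_outside ?I H"
    hence h: "hermitian H" and sH: "zero_outside ?I H" by auto
    obtain Q l where hQ: "hermitian Q" and QQ: "mat_mult Q Q = id_mat" and iQ: "id_outside ?I Q"
      and column: "\<And>i. mat_mult Q (mat_mult H Q) i i0 = complex_of_real l * id_mat i i0"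
      using deflating_reflection_exists[OF h sH] by blast
    define H' where "H' = mat_mult Q (mat_mult H Q)"
    have hH': "hermitian H'" unfolding H'_def by (rule hermitian_conj_hermitian[OF h hQ])
    have sH': "zero_outside ?I H'" unfolding H'_def
      by (intro id_outside_mult_zero_outside[OF _ iQ] zero_outside_mult_id_outside[OF sH iQ])
    define H'' where "H'' = (\<lambda>i j. if i = i0 \<or> j = i0 then 0 else H' i j)"
    have hH'': "hermitian H''" using hermitian_entry[OF hH'] unfolding hermitian_def H''_def mat_adj_def
      by (auto simp: fun_eq_iff)
    have sH'': "zero_outside I' H''" using sH' unfolding zero_outside_def H''_def by auto
    obtain U'' d'' where uU: "unitary U''" and iU: "id_outside I' U''" and d0: "\<forall>k. k \<notin> I' \<longrightarrow> d'' k = 0"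
      and eH'': "H'' = unitary_diag U'' d''"
      using insert.IH hH'' sH'' by blast
    define d where "d = d''(i0 := l)"
    have eH': "H' = unitary_diag U'' d" unfolding d_def
      using unitary_diag_insert_eigenvalue[OF hH' column[folded H'_def] insert.hyps(2) iU d0] eH''
      by (simp add: H''_def)
    have "H = mat_mult Q (mat_mult H' Q)" unfolding H'_def
      by (simp add: mat_mult_assoc[symmetric] QQ) (simp add: mat_mult_assoc QQ)
    also have "\<dots> = unitary_diag (mat_mult Q U'') d"
      unfolding eH' using unitary_diag_conj[of Q U'' d] hQ by (simp add: hermitian_def)
    finally have eH: "H = unitary_diag (mat_mult Q U'') d" .
    have uQ: "unitary Q" using hQ QQ by (simp add: unitary_def hermitian_def)
    have iU': "id_outside ?I U''" using iU by (auto simp: id_outside_def)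
    show "\<exists>U d. unitary U \<and> id_outside ?I U \<and> (\<forall>k. k \<notin> ?I \<longrightarrow> d k = 0) \<and> H = unitary_diag U d"
      using unitary_mat_mult[OF uQ uU] id_outside_mat_mult[OF iQ iU'] eH d0
      by (intro exI[of _ "mat_mult Q U''"] exI[of _ d]) (auto simp: d_def)
  qed
qed

theorem spectral_theorem:
  fixes H :: "'x::finite qop"
  assumes "hermitian H"
  shows "\<exists>U d. unitary U \<and> H = unitary_diag U d"
  using spectral_theorem_on_support[of UNIV] assms unfolding zero_outside_def by blast

section \<open>Positive semidefinite matrices and the trace norm\<close>

lemma quadratic_form_two_basis:
  "cinner (\<lambda>k. a * id_mat k i + b * id_mat k j) (mat_vec X (\<lambda>k. a * id_mat k i + b * id_mat k j)) =
   cnj a * a * X i i + cnj a * b * X i j + cnj b * a * X j i + cnj b * b * X j j"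
  by (simp add: cinner_def mat_vec_def algebra_simps sum.distrib id_mat_def if_0_mult mult_if_0 cnj_if0)

lemma psd_hermitian:
  assumes "psd X" shows "hermitian X"
proof -
  have r: "Im (cinner v (mat_vec X v)) = 0" for v using assms by (simp add: psd_iff complex_is_Real_iff)
  have xs: "X j i = cnj (X i j)" for i j
  proof -
    have 1: "Im (X i i) = 0" for i using r[of "\<lambda>k. 1 * id_mat k i + 0 * id_mat k i"] unfolding quadratic_form_two_basis by simp
    have 2: "Im (X i j + X j i) = 0" using r[of "\<lambda>k. 1 * id_mat k i + 1 * id_mat k j"] 1[of i] 1[of j]
      unfolding quadratic_form_two_basis by simp
    have 3: "Re (X i j - X j i) = 0" using r[of "\<lambda>k. 1 * id_mat k i + \<i> * id_mat k j"] 1[of i] 1[of j]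
      unfolding quadratic_form_two_basis by simp
    show ?thesis using 2 3 by (simp add: complex_eq_iff)
  qed
  have "mat_adj X = X" unfolding mat_adj_def by (rule ext, rule ext, subst xs, simp)
  thus ?thesis by (simp add: hermitian_def)
qed

definition mat_col :: "('x \<Rightarrow> 'x \<Rightarrow> complex) \<Rightarrow> 'x \<Rightarrow> 'x \<Rightarrow> complex" where "mat_col U k = (\<lambda>i. U i k)"

lemma mat_vec_diag_mat: "mat_vec (diag_mat d) c = (\<lambda>k. complex_of_real (d k) * c k)"
  by (simp add: mat_vec_def diag_mat_def if_0_mult)

lemma quadratic_form_diag_mat: "cinner c (mat_vec (diag_mat d) c) = (\<Sum>k\<in>UNIV. complex_of_real (d k * (cmod (c k))\<^sup>2))"
proof -
  have e: "cnj (c k) * (complex_of_real (d k) * c k) = complex_of_real (d k * (cmod (c k))\<^sup>2)" for k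
    by (simp only: of_real_mult complex_norm_square) (simp add: mult_ac)
  show ?thesis unfolding mat_vec_diag_mat cinner_def e ..
qed

lemma mat_vec_adj_eq_cinner_col: "mat_vec (mat_adj U) v = (\<lambda>k. cinner (mat_col U k) v)"
  by (simp add: mat_vec_def mat_adj_def cinner_def mat_col_def)

lemma quadratic_form_unitary_diag_sum:
  "cinner v (mat_vec (unitary_diag U d) v) = (\<Sum>k\<in>UNIV. complex_of_real (d k * (cmod (cinner (mat_col U k) v))\<^sup>2))"
  unfolding unitary_diag_eq_mat_mult mat_vec_mult cinner_mat_vec[of v U] quadratic_form_diag_mat mat_vec_adj_eq_cinner_col ..

lemma unitary_col_orthonormal: "unitary U \<Longrightarrow> cinner (mat_col U j) (mat_col U k) = id_mat j k"
  unfolding unitary_def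
  by (drule conjunct1, drule fun_cong[where x=j], drule fun_cong[where x=k])
     (simp add: mat_mult_def mat_adj_def cinner_def mat_col_def)

lemma diag_mat_one: "diag_mat (\<lambda>_. 1) = id_mat" by (simp add: diag_mat_def id_mat_def fun_eq_iff)

lemma unitary_diag_one: "unitary U \<Longrightarrow> unitary_diag U (\<lambda>_. 1) = id_mat"
  by (simp add: unitary_diag_eq_mat_mult diag_mat_one unitary_def)

lemma parseval: "unitary U \<Longrightarrow> (\<Sum>k\<in>UNIV. (cmod (cinner (mat_col U k) v))\<^sup>2) = Re (cinner v v)"
  using quadratic_form_unitary_diag_sum[of v U "\<lambda>_. 1"] by (simp add: unitary_diag_one)

lemma quadratic_form_unitary_diag: "cinner v (mat_vec (unitary_diag U d) v) = complex_of_real (\<Sum>k\<in>UNIV. d k * (cmod (cinner (mat_col U k) v))\<^sup>2)"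
  unfolding quadratic_form_unitary_diag_sum of_real_sum ..

lemma psd_unitary_diag: "(\<And>k. 0 \<le> d k) \<Longrightarrow> psd (unitary_diag U d)"
  unfolding psd_iff quadratic_form_unitary_diag by (simp add: sum_nonneg)

lemma psd_unitary_diag_nonneg: assumes "unitary U" "psd (unitary_diag U d)" shows "0 \<le> d k"
proof -
  have "cinner (mat_col U k) (mat_vec (unitary_diag U d) (mat_col U k)) = complex_of_real (d k)"
  proof -
    have e: "d x * (cmod (id_mat x k))\<^sup>2 = (if x = k then d k else 0)" for x by (simp add: id_mat_def)
    show ?thesis unfolding quadratic_form_unitary_diag unitary_col_orthonormal[OF assms(1)] e by simp
  qed
  thus ?thesis using assms(2) unfolding psd_iff by (metis Re_complex_of_real)
qed

lemma diag_mat_mult: "mat_mult (diag_mat a) (diag_mat b) = diag_mat (\<lambda>k. a k * b k)"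
  by (simp add: mat_mult_def diag_mat_def fun_eq_iff if_0_mult mult_if_0)

lemma mat_mult_diag_mat_right: "mat_mult Q (diag_mat e) = (\<lambda>i j. Q i j * complex_of_real (e j))"
  by (simp add: mat_mult_def diag_mat_def fun_eq_iff mult_if_0)
lemma mat_mult_diag_mat_left: "mat_mult (diag_mat e) Q = (\<lambda>i j. complex_of_real (e i) * Q i j)"
  by (simp add: mat_mult_def diag_mat_def fun_eq_iff if_0_mult)

lemma unitary_diag_mult: "unitary U \<Longrightarrow> mat_mult (unitary_diag U a) (unitary_diag U b) = unitary_diag U (\<lambda>k. a k * b k)"
  unfolding unitary_diag_eq_mat_mult unitary_def
  by (simp add: mat_mult_assoc) (simp add: mat_mult_assoc[symmetric] diag_mat_mult)

lemma psd_sqrt_exists: assumes "psd A" shows "\<exists>S. psd S \<and> mat_mult S S = A"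
proof -
  obtain U d where U: "unitary U" and A: "A = unitary_diag U d" using spectral_theorem[OF psd_hermitian[OF assms]] by blast
  have d0: "0 \<le> d k" for k using psd_unitary_diag_nonneg[OF U] assms A by simp
  show ?thesis
    by (intro exI[of _ "unitary_diag U (\<lambda>k. sqrt (d k))"])
       (simp add: psd_unitary_diag unitary_diag_mult[OF U] A d0)
qed

text \<open>Q = U* V intertwines diag(e * e) with diag(d), hence diag(e) with diag(sqrt d) since e \<ge> 0.\<close>

lemma psd_sqrt_eq_unitary_diag:
  assumes U: "unitary U" and d0: "\<And>k. 0 \<le> d k" and S: "psd S" and SS: "mat_mult S S = unitary_diag U d"
  shows "S = unitary_diag U (\<lambda>k. sqrt (d k))"
proof -
  obtain V e where V: "unitary V" and Se: "S = unitary_diag V e" using spectral_theorem[OF psd_hermitian[OF S]] by blast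
  have e0: "0 \<le> e k" for k using psd_unitary_diag_nonneg[OF V] S Se by simp
  define Q where "Q = mat_mult (mat_adj U) V"
  have eq: "unitary_diag V (\<lambda>k. e k * e k) = unitary_diag U d" using SS unfolding Se unitary_diag_mult[OF V] .
  have "mat_mult (mat_mult (mat_adj U) (unitary_diag V (\<lambda>k. e k * e k))) V = mat_mult (mat_mult (mat_adj U) (unitary_diag U d)) V"
    unfolding eq ..
  hence "mat_mult Q (diag_mat (\<lambda>k. e k * e k)) = mat_mult (diag_mat d) Q"
    using U V unfolding Q_def unitary_diag_eq_mat_mult unitary_def
    by (simp add: mat_mult_assoc) (simp add: mat_mult_assoc[symmetric])
  hence qe: "Q i j * complex_of_real (e j * e j) = complex_of_real (d i) * Q i j" for i j
    unfolding mat_mult_diag_mat_right mat_mult_diag_mat_left by (drule_tac fun_cong[where x=i], drule_tac fun_cong[where x=j]) simp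
  have qe2: "Q i j * complex_of_real (e j) = complex_of_real (sqrt (d i)) * Q i j" for i j
  proof (cases "Q i j = 0")
    case False
    have "Q i j * (complex_of_real (e j * e j) - complex_of_real (d i)) = 0"
      using qe[of i j] by (simp add: algebra_simps del: of_real_mult)
    hence "complex_of_real (e j * e j) - complex_of_real (d i) = 0" using False by simp
    hence "e j * e j = d i" by (simp del: of_real_mult flip: of_real_diff)
    hence "sqrt (d i) = \<bar>e j\<bar>" using real_sqrt_abs2[of "e j"] by simp
    hence "e j = sqrt (d i)" using e0[of j] by simp
    thus ?thesis by (simp add: mult.commute)
  qed simp
  hence Qe: "mat_mult Q (diag_mat e) = mat_mult (diag_mat (\<lambda>k. sqrt (d k))) Q"
    unfolding mat_mult_diag_mat_right mat_mult_diag_mat_left by (simp add: fun_eq_iff)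
  have VUQ: "V = mat_mult U Q" using U unfolding Q_def unitary_def by (simp add: mat_mult_assoc[symmetric])
  have "S = mat_mult (mat_mult (mat_mult U Q) (diag_mat e)) (mat_adj V)" unfolding Se unitary_diag_eq_mat_mult VUQ[symmetric] ..
  also have "\<dots> = mat_mult (mat_mult U (mat_mult (diag_mat (\<lambda>k. sqrt (d k))) Q)) (mat_adj V)"
    by (simp add: mat_mult_assoc Qe)
  also have "\<dots> = unitary_diag U (\<lambda>k. sqrt (d k))"
    using V unfolding Q_def unitary_diag_eq_mat_mult unitary_def by (simp add: mat_mult_assoc)
  finally show ?thesis .
qed

lemma psd_sqrt_unique:
  assumes "psd A" "psd S1" "mat_mult S1 S1 = A" "psd S2" "mat_mult S2 S2 = A"
  shows "S1 = S2"
proof -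
  obtain U d where U: "unitary U" and A: "A = unitary_diag U d" using spectral_theorem[OF psd_hermitian[OF assms(1)]] by blast
  have d0: "0 \<le> d k" for k using psd_unitary_diag_nonneg[OF U] assms(1) A by simp
  show ?thesis using psd_sqrt_eq_unitary_diag[OF U d0 assms(2)] psd_sqrt_eq_unitary_diag[OF U d0 assms(4)] assms(3,5) A
    by simp
qed

lemma psd_gram: "psd (mat_mult (mat_adj X) (X::'p::finite \<Rightarrow> 'x::finite \<Rightarrow> complex))"
proof -
  have "cinner v (mat_vec (mat_mult (mat_adj X) X) v) = cinner (mat_vec X v) (mat_vec X v)" for v
    unfolding mat_vec_mult cinner_mat_vec[of v "mat_adj X"] mat_adj_adj ..
  thus ?thesis unfolding psd_iff using cinner_self[of "mat_vec X v" for v] cinner_self_nonneg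
    by (metis Reals_of_real)
qed

lemma abs_op_psd_sqrt: "psd (abs_op X) \<and> mat_mult (abs_op X) (abs_op X) = mat_mult (mat_adj X) X"
proof -
  obtain S where S: "psd S \<and> mat_mult S S = mat_mult (mat_adj X) X" using psd_sqrt_exists[OF psd_gram[of X]] by blast
  have "\<exists>!S. psd S \<and> mat_mult S S = mat_mult (mat_adj X) X"
    using S psd_sqrt_unique[OF psd_gram[of X]] by blast
  hence "psd (THE S. psd S \<and> mat_mult S S = mat_mult (mat_adj X) X) \<and>
         mat_mult (THE S. psd S \<and> mat_mult S S = mat_mult (mat_adj X) X) (THE S. psd S \<and> mat_mult S S = mat_mult (mat_adj X) X) = mat_mult (mat_adj X) X"
    by (rule theI')
  thus ?thesis unfolding abs_op_def mmult_eq_mat_mult adj_eq_mat_adj .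
qed

lemma abs_op_unique: "psd S \<Longrightarrow> mat_mult S S = mat_mult (mat_adj X) X \<Longrightarrow> abs_op X = S"
  using abs_op_psd_sqrt[of X] psd_sqrt_unique[OF psd_gram[of X]] by blast

lemma qtrace_diag_mat: "qtrace (diag_mat a) = (\<Sum>k\<in>UNIV. complex_of_real (a k))"
  by (simp add: qtrace_def diag_mat_def)

lemma qtrace_unitary_diag: "unitary U \<Longrightarrow> qtrace (unitary_diag U a) = (\<Sum>k\<in>UNIV. complex_of_real (a k))"
  unfolding unitary_diag_eq_mat_mult unitary_def
  by (subst qtrace_mat_mult_commute) (simp add: mat_mult_assoc[symmetric] qtrace_diag_mat)

lemma mat_adj_unitary_diag: "mat_adj (unitary_diag U d) = unitary_diag U d" using hermitian_unitary_diag[of U d] by (simp add: hermitian_def)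

lemma trace_norm_unitary_diag: assumes U: "unitary U" shows "trace_norm (unitary_diag U d) = (\<Sum>k\<in>UNIV. \<bar>d k\<bar>)"
proof -
  have "abs_op (unitary_diag U d) = unitary_diag U (\<lambda>k. \<bar>d k\<bar>)"
    by (rule abs_op_unique) (simp_all add: psd_unitary_diag mat_adj_unitary_diag unitary_diag_mult[OF U] abs_mult_self_eq)
  thus ?thesis by (simp add: trace_norm_def qtrace_unitary_diag[OF U] Re_sum)
qed

definition herm_contraction :: "('x::finite) qop \<Rightarrow> bool" where
  "herm_contraction W \<longleftrightarrow> hermitian W \<and> (\<forall>v. \<bar>Re (cinner v (mat_vec W v))\<bar> \<le> Re (cinner v v))"

lemma qtrace_mult_diag_mat: "qtrace (mat_mult M (diag_mat d)) = (\<Sum>k\<in>UNIV. M k k * complex_of_real (d k))"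
  by (simp add: qtrace_def mat_mult_diag_mat_right)

lemma qtrace_mult_unitary_diag:
  "qtrace (mat_mult W (unitary_diag U d)) = (\<Sum>k\<in>UNIV. cinner (mat_col U k) (mat_vec W (mat_col U k)) * complex_of_real (d k))"
proof -
  have "qtrace (mat_mult W (unitary_diag U d)) = qtrace (mat_mult (mat_mult W (mat_mult U (diag_mat d))) (mat_adj U))"
    by (simp add: unitary_diag_eq_mat_mult mat_mult_assoc)
  also have "\<dots> = qtrace (mat_mult (mat_adj U) (mat_mult W (mat_mult U (diag_mat d))))" by (rule qtrace_mat_mult_commute)
  also have "\<dots> = qtrace (mat_mult (mat_mult (mat_adj U) (mat_mult W U)) (diag_mat d))" by (simp add: mat_mult_assoc)
  also have "\<dots> = (\<Sum>k\<in>UNIV. cinner (mat_col U k) (mat_vec W (mat_col U k)) * complex_of_real (d k))"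
    unfolding qtrace_mult_diag_mat by (simp add: mat_mult_def mat_adj_def cinner_def mat_vec_def mat_col_def sum_distrib_left)
  finally show ?thesis .
qed

lemma herm_contraction_quadratic_le: assumes "herm_contraction W" shows "Re (cinner v (mat_vec W v) * complex_of_real c) \<le> \<bar>c\<bar> * Re (cinner v v)"
proof -
  have "Re (cinner v (mat_vec W v) * complex_of_real c) = c * Re (cinner v (mat_vec W v))" by simp
  also have "\<dots> \<le> \<bar>c\<bar> * \<bar>Re (cinner v (mat_vec W v))\<bar>" by (simp add: abs_mult[symmetric])
  also have "\<dots> \<le> \<bar>c\<bar> * Re (cinner v v)" using assms by (simp add: herm_contraction_def mult_left_mono)
  finally show ?thesis .
qed

lemma trace_norm_ge_contraction: assumes h: "hermitian X" and W: "herm_contraction W" shows "Re (qtrace (mat_mult W X)) \<le> trace_norm X"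
proof -
  obtain U d where U: "unitary U" and X: "X = unitary_diag U d" using spectral_theorem[OF h] by blast
  have "Re (qtrace (mat_mult W X)) = (\<Sum>k\<in>UNIV. Re (cinner (mat_col U k) (mat_vec W (mat_col U k)) * complex_of_real (d k)))"
    unfolding X qtrace_mult_unitary_diag by simp
  also have "\<dots> \<le> (\<Sum>k\<in>UNIV. \<bar>d k\<bar>)"
  proof (rule sum_mono)
    fix k
    have "Re (cinner (mat_col U k) (mat_vec W (mat_col U k)) * complex_of_real (d k)) \<le> \<bar>d k\<bar> * Re (cinner (mat_col U k) (mat_col U k))"
      by (rule herm_contraction_quadratic_le[OF W])
    thus "Re (cinner (mat_col U k) (mat_vec W (mat_col U k)) * complex_of_real (d k)) \<le> \<bar>d k\<bar>"
      using unitary_col_orthonormal[OF U, of k k] by (simp add: id_mat_def)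
  qed
  finally show ?thesis unfolding X trace_norm_unitary_diag[OF U] .
qed

lemma trace_norm_attained: assumes h: "hermitian X" shows "\<exists>W. herm_contraction W \<and> Re (qtrace (mat_mult W X)) = trace_norm X"
proof -
  obtain U d where U: "unitary U" and X: "X = unitary_diag U d" using spectral_theorem[OF h] by blast
  define W where "W = unitary_diag U (\<lambda>k. sgn (d k))"
  have "herm_contraction W"
  proof -
    have "\<bar>Re (cinner v (mat_vec W v))\<bar> \<le> Re (cinner v v)" for v
    proof -
      have "\<bar>Re (cinner v (mat_vec W v))\<bar> = \<bar>\<Sum>k\<in>UNIV. sgn (d k) * (cmod (cinner (mat_col U k) v))\<^sup>2\<bar>"
        unfolding W_def quadratic_form_unitary_diag by simp
      also have "\<dots> \<le> (\<Sum>k\<in>UNIV. \<bar>sgn (d k) * (cmod (cinner (mat_col U k) v))\<^sup>2\<bar>)" by (rule sum_abs)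
      also have "\<dots> \<le> (\<Sum>k\<in>UNIV. (cmod (cinner (mat_col U k) v))\<^sup>2)"
        by (rule sum_mono) (simp add: abs_mult abs_sgn_eq)
      also have "\<dots> = Re (cinner v v)" by (rule parseval[OF U])
      finally show ?thesis .
    qed
    thus ?thesis unfolding herm_contraction_def W_def using hermitian_unitary_diag by blast
  qed
  moreover have "Re (qtrace (mat_mult W X)) = trace_norm X"
  proof -
    have "mat_mult W X = unitary_diag U (\<lambda>k. \<bar>d k\<bar>)"
    proof -
      have "(\<lambda>k. sgn (d k) * d k) = (\<lambda>k. \<bar>d k\<bar>)" by (auto simp: fun_eq_iff abs_if sgn_if)
      thus ?thesis unfolding W_def X unitary_diag_mult[OF U] by simp
    qed
    thus ?thesis unfolding X trace_norm_unitary_diag[OF U] by (simp add: qtrace_unitary_diag[OF U] Re_sum)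
  qed
  ultimately show ?thesis by blast
qed

lemma trace_norm_psd: assumes "psd P" shows "trace_norm P = Re (qtrace P)"
proof -
  obtain U d where U: "unitary U" and P: "P = unitary_diag U d" using spectral_theorem[OF psd_hermitian[OF assms]] by blast
  have d0: "0 \<le> d k" for k using psd_unitary_diag_nonneg[OF U] assms P by simp
  show ?thesis unfolding P trace_norm_unitary_diag[OF U] qtrace_unitary_diag[OF U] using d0 by (simp flip: of_real_sum)
qed

lemma herm_contraction_id: "herm_contraction id_mat" by (simp add: herm_contraction_def hermitian_def cinner_self_nonneg)

lemma trace_le_trace_norm: "hermitian X \<Longrightarrow> Re (qtrace X) \<le> trace_norm X"
  using trace_norm_ge_contraction[OF _ herm_contraction_id] by simp

lemma qtrace_lin_comb: "qtrace (\<lambda>i j. \<Sum>k\<in>K. c k * X k i j) = (\<Sum>k\<in>K. c k * qtrace (X k))"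
  unfolding qtrace_def by (simp add: sum_distrib_left) (rule sum.swap)

lemma mat_mult_lin_comb: "mat_mult W (\<lambda>i j. \<Sum>k\<in>K. c k * X k i j) = (\<lambda>i j. \<Sum>k\<in>K. c k * mat_mult W (X k) i j)"
  unfolding mat_mult_def by (simp add: sum_distrib_left mult_ac fun_eq_iff) (intro allI, rule sum.swap)

lemma trace_norm_lin_comb_le:
  assumes hs: "hermitian (\<lambda>i j. \<Sum>k\<in>K. complex_of_real (c k) * X k i j)"
    and hX: "\<And>k. k \<in> K \<Longrightarrow> hermitian (X k)"
  shows "trace_norm (\<lambda>i j. \<Sum>k\<in>K. complex_of_real (c k) * X k i j) \<le> (\<Sum>k\<in>K. \<bar>c k\<bar> * trace_norm (X k))"
proof -
  obtain W where W: "herm_contraction W" and eq: "Re (qtrace (mat_mult W (\<lambda>i j. \<Sum>k\<in>K. complex_of_real (c k) * X k i j))) =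
      trace_norm (\<lambda>i j. \<Sum>k\<in>K. complex_of_real (c k) * X k i j)"
    using trace_norm_attained[OF hs] by blast
  have "Re (qtrace (mat_mult W (\<lambda>i j. \<Sum>k\<in>K. complex_of_real (c k) * X k i j))) =
        (\<Sum>k\<in>K. c k * Re (qtrace (mat_mult W (X k))))"
    unfolding mat_mult_lin_comb qtrace_lin_comb by (simp add: Re_sum)
  also have "\<dots> \<le> (\<Sum>k\<in>K. \<bar>c k\<bar> * trace_norm (X k))"
  proof (rule sum_mono)
    fix k assume k: "k \<in> K"
    have "herm_contraction (\<lambda>i j. - W i j)" using W
      by (simp add: herm_contraction_def hermitian_def mat_adj_def fun_eq_iff mat_vec_def cinner_def sum_negf)
    hence m: "Re (qtrace (mat_mult (\<lambda>i j. - W i j) (X k))) \<le> trace_norm (X k)"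
      by (rule trace_norm_ge_contraction[OF hX[OF k]])
    have p: "Re (qtrace (mat_mult W (X k))) \<le> trace_norm (X k)" by (rule trace_norm_ge_contraction[OF hX[OF k] W])
    have "qtrace (mat_mult (\<lambda>i j. - W i j) (X k)) = - qtrace (mat_mult W (X k))"
      by (simp add: qtrace_def mat_mult_def sum_negf)
    hence "\<bar>Re (qtrace (mat_mult W (X k)))\<bar> \<le> trace_norm (X k)" using m p by simp
    thus "c k * Re (qtrace (mat_mult W (X k))) \<le> \<bar>c k\<bar> * trace_norm (X k)"
      by (metis abs_ge_self abs_mult abs_ge_zero mult_left_mono order_trans)
  qed
  finally show ?thesis using eq by simp
qed

section \<open>Linear maps on operators\<close>

lemma linear_qmap_add: "linear_qmap \<Phi> \<Longrightarrow> \<Phi> (\<lambda>i j. X i j + Y i j) = (\<lambda>i j. \<Phi> X i j + \<Phi> Y i j)"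
  by (simp add: linear_qmap_def)
lemma linear_qmap_scale: "linear_qmap \<Phi> \<Longrightarrow> \<Phi> (\<lambda>i j. c * X i j) = (\<lambda>i j. c * \<Phi> X i j)"
  by (simp add: linear_qmap_def)
lemma linear_qmap_zero: assumes "linear_qmap \<Phi>" shows "\<Phi> (\<lambda>_ _. 0) = (\<lambda>_ _. 0)"
  using linear_qmap_scale[OF assms, of 0 "\<lambda>_ _. 0"] by simp

lemma linear_qmap_lin_comb:
  assumes L: "linear_qmap \<Phi>" and K: "finite K"
  shows "\<Phi> (\<lambda>i j. \<Sum>k\<in>K. c k * X k i j) = (\<lambda>i j. \<Sum>k\<in>K. c k * \<Phi> (X k) i j)"
  using K
proof (induction K rule: finite_induct)
  case empty thus ?case using linear_qmap_zero[OF L] by simp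
next
  case (insert a K)
  have "\<Phi> (\<lambda>i j. \<Sum>k\<in>insert a K. c k * X k i j) = \<Phi> (\<lambda>i j. c a * X a i j + (\<Sum>k\<in>K. c k * X k i j))"
    using insert.hyps by simp
  also have "\<dots> = (\<lambda>i j. c a * \<Phi> (X a) i j + (\<Sum>k\<in>K. c k * \<Phi> (X k) i j))"
    by (subst linear_qmap_add[OF L]) (simp add: linear_qmap_scale[OF L] insert.IH)
  also have "\<dots> = (\<lambda>i j. \<Sum>k\<in>insert a K. c k * \<Phi> (X k) i j)" using insert.hyps by simp
  finally show ?case .
qed

lemma linear_qmap_id_tensor: "linear_qmap \<Phi> \<Longrightarrow> linear_qmap (id_tensor \<Phi>)"
  unfolding linear_qmap_def id_tensor_def by (simp add: fun_eq_iff)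

lemma id_tensor_comp: "id_tensor (\<lambda>X. f (g X)) X = id_tensor f (id_tensor g X)"
  by (simp add: id_tensor_def fun_eq_iff split: prod.splits)

lemma ptrans_ptrans[simp]: "ptrans (ptrans X) = X"
  by (simp add: ptrans_def fun_eq_iff split: prod.splits)

lemma qtrace_ptrans: "qtrace (ptrans (X::('a::finite \<times> 'b::finite) qop)) = qtrace X"
  unfolding qtrace_def ptrans_def by (simp add: case_prod_beta)

lemma mat_adj_ptrans: "mat_adj (ptrans X) = ptrans (mat_adj X)"
  by (simp add: mat_adj_def ptrans_def fun_eq_iff split: prod.splits)

lemma pt_conj_comp: "pt_conj (\<lambda>X. f (g X)) = (\<lambda>X. pt_conj f (pt_conj g X))"
  by (simp add: pt_conj_def fun_eq_iff)

lemma ptrans_add: "ptrans (\<lambda>i j. X i j + Y i j) = (\<lambda>i j. ptrans X i j + ptrans Y i j)"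
  by (simp add: ptrans_def fun_eq_iff)
lemma ptrans_scale: "ptrans (\<lambda>i j. c * X i j) = (\<lambda>i j. c * ptrans X i j)"
  by (simp add: ptrans_def fun_eq_iff)

lemma linear_qmap_pt_conj: "linear_qmap \<Phi> \<Longrightarrow> linear_qmap (pt_conj \<Phi>)"
  unfolding linear_qmap_def pt_conj_def ptrans_add ptrans_scale by (simp add: ptrans_add ptrans_scale)

lemma tp_map_pt_conj: "tp_map \<Phi> \<Longrightarrow> tp_map (pt_conj \<Phi>)"
  unfolding tp_map_def pt_conj_def by (simp add: qtrace_ptrans)

lemma qtrace_prod: "qtrace (X :: ('a::finite \<times> 'b::finite) qop) = (\<Sum>a\<in>UNIV. \<Sum>b\<in>UNIV. X (a,b) (a,b))"
  unfolding qtrace_def by (simp add: sum.cartesian_product)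

lemma qtrace_id_tensor: "tp_map \<Phi> \<Longrightarrow> qtrace (id_tensor \<Phi> (X :: ('r::finite \<times> 'x::finite) qop)) = qtrace X"
proof -
  assume tp: "tp_map \<Phi>"
  have "qtrace (id_tensor \<Phi> X) = (\<Sum>r\<in>UNIV. qtrace (\<Phi> (\<lambda>x x'. X (r, x) (r, x'))))"
    unfolding qtrace_prod by (simp add: id_tensor_def qtrace_def)
  also have "\<dots> = (\<Sum>r\<in>UNIV. qtrace (\<lambda>x x'. X (r, x) (r, x')))" using tp by (simp add: tp_map_def)
  also have "\<dots> = qtrace X" unfolding qtrace_prod by (simp add: qtrace_def)
  finally show ?thesis .
qed

lemma psd_on_reindex:
  assumes bij: "bij_betw h A B" and P: "psd_on B Y"
  shows "psd_on A (\<lambda>i j. Y (h i) (h j))"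
  unfolding psd_on_def
proof
  fix v :: "'a \<Rightarrow> complex"
  define w where "w = (\<lambda>b. v (inv_into A h b))"
  have vw: "v i = w (h i)" if "i \<in> A" for i
    using that bij by (simp add: w_def bij_betw_def)
  have "(\<Sum>i\<in>A. \<Sum>j\<in>A. cnj (v i) * Y (h i) (h j) * v j) = (\<Sum>i\<in>A. \<Sum>j\<in>A. cnj (w (h i)) * Y (h i) (h j) * w (h j))"
    by (intro sum.cong refl) (simp add: vw)
  also have "\<dots> = (\<Sum>i\<in>A. \<Sum>j\<in>B. cnj (w (h i)) * Y (h i) j * w j)"
    by (intro sum.cong refl sum.reindex_bij_betw[OF bij])
  also have "\<dots> = (\<Sum>i\<in>B. \<Sum>j\<in>B. cnj (w i) * Y i j * w j)"
    by (rule sum.reindex_bij_betw[OF bij, where g = "\<lambda>i. \<Sum>j\<in>B. cnj (w i) * Y i j * w j"])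
  finally show "(\<Sum>i\<in>A. \<Sum>j\<in>A. cnj (v i) * Y (h i) (h j) * v j) \<in> \<real> \<and>
      0 \<le> Re (\<Sum>i\<in>A. \<Sum>j\<in>A. cnj (v i) * Y (h i) (h j) * v j)"
    using P unfolding psd_on_def by simp
qed

lemma cp_map_id_tensor_psd:
  fixes \<Phi> :: "'x::finite qop \<Rightarrow> 'y::finite qop"
  assumes cp: "cp_map \<Phi>" and X: "psd (X :: ('r::finite \<times> 'x::finite) qop)"
  shows "psd (id_tensor \<Phi> X)"
proof -
  txt \<open>Transport the reference 'r to the ancilla {..<CARD('r)} used in the definition of cp_map.\<close>
  let ?n = "CARD('r)"
  obtain f :: "'r \<Rightarrow> nat" where f: "bij_betw f UNIV {0..<?n}"
    using ex_bij_betw_finite_nat[of "UNIV :: 'r set"] by auto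
  have f': "bij_betw f UNIV {..<?n}" using f by (simp add: lessThan_atLeast0)
  define g where "g = inv_into UNIV f"
  have gf: "g (f r) = r" for r unfolding g_def using f' by (simp add: bij_betw_def)
  define h :: "nat \<times> 'x \<Rightarrow> 'r \<times> 'x" where "h = (\<lambda>(a, x). (g a, x))"
  have fg: "f (g a) = a" if "a \<in> {..<?n}" for a
    unfolding g_def using f' that by (simp add: bij_betw_inv_into_right)
  have hb: "bij_betw h ({..<?n} \<times> UNIV) UNIV"
    by (rule bij_betw_byWitness[where f' = "\<lambda>(r, x). (f r, x)"])
       (use f' in \<open>auto simp: h_def gf fg bij_betw_def image_def\<close>)
  define X' where "X' = (\<lambda>i j. X (h i) (h j))"
  have "psd_on ({..<?n} \<times> UNIV) X'" unfolding X'_def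
    by (rule psd_on_reindex[OF hb]) (use X in \<open>simp add: psd_def\<close>)
  hence P: "psd_on ({..<?n} \<times> UNIV) (id_tensor \<Phi> X')" using cp by (simp add: cp_map_def)
  define h' :: "'r \<times> 'y \<Rightarrow> nat \<times> 'y" where "h' = (\<lambda>(r, y). (f r, y))"
  have fn: "f r \<in> {..<?n}" for r using f' by (auto simp: bij_betw_def)
  have hb': "bij_betw h' UNIV ({..<?n} \<times> UNIV)"
    by (rule bij_betw_byWitness[where f' = "\<lambda>(a, y). (g a, y)"])
       (use fn in \<open>auto simp: h'_def gf fg\<close>)
  have "psd_on UNIV (\<lambda>i j. id_tensor \<Phi> X' (h' i) (h' j))" by (rule psd_on_reindex[OF hb' P])
  moreover have "(\<lambda>i j. id_tensor \<Phi> X' (h' i) (h' j)) = id_tensor \<Phi> X"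
    by (simp add: fun_eq_iff id_tensor_def X'_def h'_def h_def gf split: prod.splits)
  ultimately show ?thesis by (simp add: psd_def)
qed

definition positive_map :: "(('x::finite) qop \<Rightarrow> ('y::finite) qop) \<Rightarrow> bool" where
  "positive_map \<Phi> \<longleftrightarrow> (\<forall>P. psd P \<longrightarrow> psd (\<Phi> P))"

definition herm_preserving :: "('x qop \<Rightarrow> 'y qop) \<Rightarrow> bool" where
  "herm_preserving \<Phi> \<longleftrightarrow> (\<forall>X. \<Phi> (mat_adj X) = mat_adj (\<Phi> X))"

lemma cp_map_positive:
  fixes \<Phi> :: "'x::finite qop \<Rightarrow> 'y::finite qop"
  assumes cp: "cp_map \<Phi>" shows "positive_map \<Phi>"
  unfolding positive_map_def
proof (intro allI impI)
  fix P :: "'x qop" assume P: "psd P"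
  define X :: "(unit \<times> 'x) qop" where "X = (\<lambda>i j. P (snd i) (snd j))"
  have b1: "bij_betw (snd :: unit \<times> 'x \<Rightarrow> 'x) UNIV UNIV"
    by (rule bij_betw_byWitness[where f' = "\<lambda>x. ((), x)"]) auto
  have "psd X" unfolding X_def psd_def using psd_on_reindex[OF b1, of P] P by (simp add: psd_def)
  hence Y: "psd (id_tensor \<Phi> X)" by (rule cp_map_id_tensor_psd[OF cp])
  have b2: "bij_betw (\<lambda>y::'y. ((), y)) UNIV UNIV"
    by (rule bij_betw_byWitness[where f' = snd]) auto
  have "psd_on UNIV (\<lambda>i j. id_tensor \<Phi> X ((), i) ((), j))"
    using psd_on_reindex[OF b2, of "id_tensor \<Phi> X"] Y by (simp add: psd_def)
  moreover have "(\<lambda>i j. id_tensor \<Phi> X ((), i) ((), j)) = \<Phi> P"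
    by (simp add: id_tensor_def X_def fun_eq_iff)
  ultimately show "psd (\<Phi> P)" by (simp add: psd_def)
qed

lemma hermitian_diff: "hermitian X \<Longrightarrow> hermitian Y \<Longrightarrow> hermitian (\<lambda>i j. X i j - Y i j)"
  by (simp add: hermitian_def mat_adj_def fun_eq_iff)

lemma linear_qmap_diff: "linear_qmap \<Phi> \<Longrightarrow> \<Phi> (\<lambda>i j. X i j - Y i j) = (\<lambda>i j. \<Phi> X i j - \<Phi> Y i j)"
proof -
  assume L: "linear_qmap \<Phi>"
  have "(\<lambda>i j. X i j - Y i j) = (\<lambda>i j. X i j + (-1) * Y i j)" by simp
  hence "\<Phi> (\<lambda>i j. X i j - Y i j) = (\<lambda>i j. \<Phi> X i j + (-1) * \<Phi> Y i j)"
    by (simp only: linear_qmap_add[OF L] linear_qmap_scale[OF L])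
  thus ?thesis by simp
qed

lemma unitary_diag_diff: "unitary_diag U (\<lambda>k. a k - b k) = (\<lambda>i j. unitary_diag U a i j - unitary_diag U b i j)"
  by (simp add: unitary_diag_def fun_eq_iff algebra_simps sum_subtractf)

lemma positive_map_hermitian:
  assumes L: "linear_qmap \<Phi>" and P: "positive_map \<Phi>" and h: "hermitian H"
  shows "hermitian (\<Phi> H)"
proof -
  obtain U d where U: "unitary U" and H: "H = unitary_diag U d" using spectral_theorem[OF h] by blast
  have "H = unitary_diag U (\<lambda>k. max (d k) 0 - max (- d k) 0)" unfolding H by (rule arg_cong[where f="unitary_diag U"]) auto
  also have "\<dots> = (\<lambda>i j. unitary_diag U (\<lambda>k. max (d k) 0) i j - unitary_diag U (\<lambda>k. max (- d k) 0) i j)"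
    by (rule unitary_diag_diff)
  finally have "\<Phi> H = (\<lambda>i j. \<Phi> (unitary_diag U (\<lambda>k. max (d k) 0)) i j - \<Phi> (unitary_diag U (\<lambda>k. max (- d k) 0)) i j)"
    by (simp add: linear_qmap_diff[OF L])
  moreover have "hermitian (\<Phi> (unitary_diag U (\<lambda>k. max (d k) 0)))" "hermitian (\<Phi> (unitary_diag U (\<lambda>k. max (- d k) 0)))"
    using P psd_unitary_diag[of "\<lambda>k. max (d k) 0" U] psd_unitary_diag[of "\<lambda>k. max (- d k) 0" U]
    by (auto simp: positive_map_def intro: psd_hermitian)
  ultimately show ?thesis by (simp add: hermitian_diff)
qed

lemma positive_map_herm_preserving:
  assumes L: "linear_qmap \<Phi>" and P: "positive_map \<Phi>"
  shows "herm_preserving \<Phi>"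
  unfolding herm_preserving_def
proof
  fix X :: "'a qop"
  define H1 where "H1 = (\<lambda>i j. (X i j + cnj (X j i)) / 2)"
  define H2 where "H2 = (\<lambda>i j. (X i j - cnj (X j i)) / (2 * \<i>))"
  have h1: "hermitian H1" by (simp add: hermitian_def mat_adj_def H1_def fun_eq_iff add.commute)
  have h2: "hermitian H2" by (simp add: hermitian_def mat_adj_def H2_def fun_eq_iff field_simps)
  have X: "X = (\<lambda>i j. H1 i j + \<i> * H2 i j)" by (simp add: H1_def H2_def fun_eq_iff field_simps)
  have RX: "mat_adj X = (\<lambda>i j. H1 i j + (- \<i>) * H2 i j)" by (simp add: H1_def H2_def mat_adj_def fun_eq_iff field_simps)
  have e1: "cnj (\<Phi> H1 j i) = \<Phi> H1 i j" for i j using positive_map_hermitian[OF L P h1] by (rule hermitian_entry)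
  have e2: "cnj (\<Phi> H2 j i) = \<Phi> H2 i j" for i j using positive_map_hermitian[OF L P h2] by (rule hermitian_entry)
  show "\<Phi> (mat_adj X) = mat_adj (\<Phi> X)"
  proof -
    have a: "\<Phi> (mat_adj X) = (\<lambda>i j. \<Phi> H1 i j + (- \<i>) * \<Phi> H2 i j)"
      unfolding RX by (simp only: linear_qmap_add[OF L] linear_qmap_scale[OF L])
    have "\<Phi> X = \<Phi> (\<lambda>i j. H1 i j + \<i> * H2 i j)" by (rule arg_cong[OF X])
    hence b: "\<Phi> X = (\<lambda>i j. \<Phi> H1 i j + \<i> * \<Phi> H2 i j)" by (simp only: linear_qmap_add[OF L] linear_qmap_scale[OF L])
    show ?thesis unfolding a b by (simp add: mat_adj_def fun_eq_iff e1 e2)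
  qed
qed

lemma herm_preserving_pt_conj: "herm_preserving \<Phi> \<Longrightarrow> herm_preserving (pt_conj \<Phi>)"
  unfolding herm_preserving_def pt_conj_def by (simp flip: mat_adj_ptrans)

lemma herm_preserving_id_tensor: "herm_preserving \<Phi> \<Longrightarrow> herm_preserving (id_tensor \<Phi>)"
proof -
  assume hp: "herm_preserving \<Phi>"
  have e: "\<Phi> (mat_adj Y) y y' = cnj (\<Phi> Y y' y)" for Y y y' using hp by (simp add: herm_preserving_def mat_adj_def)
  have b: "(\<lambda>x x'. mat_adj X (r, x) (r', x')) = mat_adj (\<lambda>x x'. X (r', x) (r, x'))" for X r r'
    by (simp add: mat_adj_def fun_eq_iff)
  show ?thesis unfolding herm_preserving_def
    by (simp add: id_tensor_def fun_eq_iff b e split: prod.splits) (simp add: mat_adj_def)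
qed

lemma herm_preserving_hermitian: "herm_preserving \<Phi> \<Longrightarrow> hermitian X \<Longrightarrow> hermitian (\<Phi> X)"
  by (simp add: herm_preserving_def hermitian_def) (metis)

lemma linear_qmap_comp: "linear_qmap f \<Longrightarrow> linear_qmap g \<Longrightarrow> linear_qmap (f \<circ> g)"
  by (simp add: linear_qmap_def)

lemma herm_preserving_comp: "herm_preserving f \<Longrightarrow> herm_preserving g \<Longrightarrow> herm_preserving (f \<circ> g)"
  by (simp add: herm_preserving_def)

lemma tp_map_comp: "tp_map f \<Longrightarrow> tp_map g \<Longrightarrow> tp_map (f \<circ> g)"
  by (simp add: tp_map_def)

lemma quantum_channel_herm_preserving: "quantum_channel \<Phi> \<Longrightarrow> herm_preserving \<Phi>"
  unfolding quantum_channel_def by (blast intro: positive_map_herm_preserving cp_map_positive)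

lemma cppt_channel_pt_conj: "cppt_channel \<Phi> \<Longrightarrow> quantum_channel (pt_conj \<Phi>)"
  unfolding cppt_channel_def quantum_channel_def by (simp add: linear_qmap_pt_conj tp_map_pt_conj)

definition ket_bra :: "('x \<Rightarrow> complex) \<Rightarrow> 'x \<Rightarrow> 'x \<Rightarrow> complex" where
  "ket_bra \<psi> = (\<lambda>a b. \<psi> a * cnj (\<psi> b))"

lemma psd_ket_bra: "psd (ket_bra (\<psi>::'x::finite \<Rightarrow> complex))"
proof -
  have "cinner v (mat_vec (ket_bra \<psi>) v) = complex_of_real ((cmod (cinner \<psi> v))\<^sup>2)" for v
  proof -
    have "cinner v (mat_vec (ket_bra \<psi>) v) = cnj (cinner \<psi> v) * cinner \<psi> v"
      by (simp add: cinner_def mat_vec_def ket_bra_def sum_distrib_left sum_distrib_right mult_ac) (rule sum.swap)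
    thus ?thesis by (simp only: complex_norm_square mult.commute)
  qed
  thus ?thesis unfolding psd_iff by simp
qed

lemma qtrace_ket_bra: "qtrace (ket_bra (\<psi>::'x::finite \<Rightarrow> complex)) = cinner \<psi> \<psi>"
  by (simp add: qtrace_def ket_bra_def cinner_def mult.commute)

lemma unitary_diag_ket_bra: "unitary_diag U d = (\<lambda>i j. \<Sum>k\<in>UNIV. complex_of_real (d k) * ket_bra (mat_col U k) i j)"
  by (simp add: unitary_diag_def ket_bra_def mat_col_def fun_eq_iff mult_ac)

lemma unitary_col_norm: "unitary U \<Longrightarrow> cinner (mat_col U k) (mat_col U k) = 1"
  using unitary_col_orthonormal[of U k k] by (simp add: id_mat_def)

lemma trace_norm_channel_id_tensor_le:
  fixes A :: "'x::finite qop \<Rightarrow> 'y::finite qop"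
  assumes L: "linear_qmap A" and cp: "cp_map A" and tp: "tp_map A"
    and h: "hermitian (Z :: ('r::finite \<times> 'x) qop)"
  shows "trace_norm (id_tensor A Z) \<le> trace_norm Z"
proof -
  obtain U d where U: "unitary U" and Z: "Z = unitary_diag U d" using spectral_theorem[OF h] by blast
  have LI: "linear_qmap (id_tensor A)" by (rule linear_qmap_id_tensor[OF L])
  have hpI: "herm_preserving (id_tensor A)" by (rule herm_preserving_id_tensor[OF positive_map_herm_preserving[OF L cp_map_positive[OF cp]]])
  have eq: "id_tensor A Z = (\<lambda>i j. \<Sum>k\<in>UNIV. complex_of_real (d k) * id_tensor A (ket_bra (mat_col U k)) i j)"
    unfolding Z unitary_diag_ket_bra by (rule linear_qmap_lin_comb[OF LI finite])
  have hs: "hermitian (id_tensor A Z)" by (rule herm_preserving_hermitian[OF hpI h])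
  have pk: "psd (id_tensor A (ket_bra (mat_col U k)))" for k by (rule cp_map_id_tensor_psd[OF cp psd_ket_bra])
  have tk: "trace_norm (id_tensor A (ket_bra (mat_col U k))) = 1" for k
    unfolding trace_norm_psd[OF pk] qtrace_id_tensor[OF tp] qtrace_ket_bra unitary_col_norm[OF U] by simp
  have "trace_norm (id_tensor A Z) \<le> (\<Sum>k\<in>UNIV. \<bar>d k\<bar> * trace_norm (id_tensor A (ket_bra (mat_col U k))))"
    unfolding eq by (rule trace_norm_lin_comb_le) (use hs eq pk psd_hermitian in auto)
  also have "\<dots> = trace_norm Z" unfolding tk Z trace_norm_unitary_diag[OF U] by simp
  finally show ?thesis .
qed

section \<open>Reduction of the reference system\<close>

lemma trace_norm_conj_contraction_le:
  fixes K :: "'q::finite qop" and A :: "'p::finite \<Rightarrow> 'q \<Rightarrow> complex"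
  assumes h: "hermitian K" and c: "\<And>u. Re (cinner (mat_vec A u) (mat_vec A u)) \<le> Re (cinner u u)"
  shows "trace_norm (mat_mult A (mat_mult K (mat_adj A))) \<le> trace_norm K"
proof -
  have h': "hermitian (mat_mult A (mat_mult K (mat_adj A)))" using h by (simp add: hermitian_def mat_adj_mult mat_mult_assoc)
  obtain W where W: "herm_contraction W" and eq: "Re (qtrace (mat_mult W (mat_mult A (mat_mult K (mat_adj A))))) = trace_norm (mat_mult A (mat_mult K (mat_adj A)))"
    using trace_norm_attained[OF h'] by blast
  define W' where "W' = mat_mult (mat_adj A) (mat_mult W A)"
  have tr: "qtrace (mat_mult W (mat_mult A (mat_mult K (mat_adj A)))) = qtrace (mat_mult W' K)"
  proof -
    have "qtrace (mat_mult W (mat_mult A (mat_mult K (mat_adj A)))) = qtrace (mat_mult (mat_mult (mat_mult W A) K) (mat_adj A))"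
      by (simp add: mat_mult_assoc)
    also have "\<dots> = qtrace (mat_mult (mat_adj A) (mat_mult (mat_mult W A) K))" by (rule qtrace_mat_mult_commute)
    also have "\<dots> = qtrace (mat_mult W' K)" by (simp add: W'_def mat_mult_assoc)
    finally show ?thesis .
  qed
  have "herm_contraction W'"
  proof -
    have hW: "hermitian W" using W by (simp add: herm_contraction_def)
    have "hermitian W'" using hW by (simp add: hermitian_def W'_def mat_adj_mult mat_mult_assoc)
    moreover have "\<bar>Re (cinner v (mat_vec W' v))\<bar> \<le> Re (cinner v v)" for v
    proof -
      have "cinner v (mat_vec W' v) = cinner (mat_vec A v) (mat_vec W (mat_vec A v))"
        unfolding W'_def mat_vec_mult cinner_mat_vec[of v "mat_adj A"] mat_adj_adj ..
      hence "\<bar>Re (cinner v (mat_vec W' v))\<bar> \<le> Re (cinner (mat_vec A v) (mat_vec A v))" using W by (simp add: herm_contraction_def)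
      also have "\<dots> \<le> Re (cinner v v)" by (rule c)
      finally show ?thesis .
    qed
    ultimately show ?thesis by (simp add: herm_contraction_def)
  qed
  hence "Re (qtrace (mat_mult W' K)) \<le> trace_norm K" by (rule trace_norm_ge_contraction[OF h])
  thus ?thesis using tr eq by simp
qed

lemma trace_norm_reindex_le:
  fixes K :: "'b::finite qop" and \<pi> :: "'a::finite \<Rightarrow> 'b"
  assumes bij: "bij \<pi>" and h: "hermitian K"
  shows "trace_norm (\<lambda>i j. K (\<pi> i) (\<pi> j)) \<le> trace_norm K"
proof -
  define A where "A = (\<lambda>i k. id_mat (\<pi> i) k)"
  have "mat_mult A (mat_mult K (mat_adj A)) = (\<lambda>i j. K (\<pi> i) (\<pi> j))"
    by (simp add: A_def mat_mult_def mat_adj_def id_mat_def fun_eq_iff if_0_mult mult_if_0 cnj_if0)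
  moreover have "Re (cinner (mat_vec A u) (mat_vec A u)) \<le> Re (cinner u u)" for u
  proof -
    have "mat_vec A u = (\<lambda>i. u (\<pi> i))" by (simp add: A_def mat_vec_def id_mat_def)
    hence "cinner (mat_vec A u) (mat_vec A u) = cinner u u"
      unfolding cinner_def by (simp add: sum_reindex_bij[OF bij, of "\<lambda>k. cnj (u k) * u k"])
    thus ?thesis by simp
  qed
  ultimately show ?thesis using trace_norm_conj_contraction_le[OF h] by metis
qed

definition tensor_id_right :: "('p \<Rightarrow> 's \<Rightarrow> complex) \<Rightarrow> ('p \<times> 'q) \<Rightarrow> ('s \<times> 'q) \<Rightarrow> complex" where
  "tensor_id_right V = (\<lambda>(r, q) (t, q'). V r t * id_mat q q')"

lemma mat_vec_tensor_id_right: "mat_vec (tensor_id_right V) u = (\<lambda>(r, q). mat_vec V (\<lambda>t. u (t, q)) r)"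
  by (simp add: fun_eq_iff mat_vec_def tensor_id_right_def sum_prod_UNIV id_mat_def mult_if_0 if_0_mult)

lemma tensor_id_right_contraction:
  fixes V :: "'p::finite \<Rightarrow> 's::finite \<Rightarrow> complex"
  assumes c: "\<And>u. Re (cinner (mat_vec V u) (mat_vec V u)) \<le> Re (cinner u u)"
  shows "Re (cinner (mat_vec (tensor_id_right V) u) (mat_vec (tensor_id_right V) (u :: 's \<times> 'q::finite \<Rightarrow> complex))) \<le> Re (cinner u u)"
proof -
  have "Re (cinner (mat_vec (tensor_id_right V) u) (mat_vec (tensor_id_right V) u)) = (\<Sum>q\<in>UNIV. Re (cinner (mat_vec V (\<lambda>t. u (t, q))) (mat_vec V (\<lambda>t. u (t, q)))))"
    unfolding mat_vec_tensor_id_right cinner_def sum_prod_UNIV Re_sum by (subst sum.swap) simp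
  also have "\<dots> \<le> (\<Sum>q\<in>UNIV. Re (cinner (\<lambda>t. u (t, q)) (\<lambda>t. u (t, q))))" by (intro sum_mono c)
  also have "\<dots> = Re (cinner u u)"
    unfolding cinner_def sum_prod_UNIV Re_sum by (subst (2) sum.swap) simp
  finally show ?thesis .
qed

lemma sum_cmod_square_eq_qtrace: "(\<Sum>x\<in>UNIV. (cmod (case x of (a, b) \<Rightarrow> M a b))\<^sup>2) = Re (qtrace (mat_mult (mat_adj M) (M :: 'a::finite \<Rightarrow> 'b::finite \<Rightarrow> complex)))"
proof -
  have e: "cnj (M a b) * M a b = complex_of_real ((cmod (M a b))\<^sup>2)" for a b
    by (simp only: complex_norm_square mult.commute)
  have "qtrace (mat_mult (mat_adj M) M) = (\<Sum>b\<in>UNIV. \<Sum>a\<in>UNIV. complex_of_real ((cmod (M a b))\<^sup>2))"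
    by (simp add: qtrace_def mat_mult_def mat_adj_def e)
  hence "Re (qtrace (mat_mult (mat_adj M) M)) = (\<Sum>b\<in>UNIV. \<Sum>a\<in>UNIV. (cmod (M a b))\<^sup>2)" by (simp add: Re_sum)
  also have "\<dots> = (\<Sum>x\<in>UNIV. (cmod (case x of (a, b) \<Rightarrow> M a b))\<^sup>2)"
    unfolding sum_prod_UNIV by (subst sum.swap) simp
  finally show ?thesis by simp
qed

lemma id_tensor_ket_bra_factor:
  fixes N :: "'x::finite qop \<Rightarrow> 'y::finite qop" and V :: "'p::finite \<Rightarrow> 's::finite \<Rightarrow> complex"
  assumes L: "linear_qmap N" and Y: "Y = mat_mult V Phi"
  shows "id_tensor N (ket_bra (\<lambda>(r, s). Y r s)) =
         mat_mult (tensor_id_right V) (mat_mult (id_tensor N (ket_bra (\<lambda>(t, s). Phi t s))) (mat_adj (tensor_id_right V)))"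
proof (rule ext, rule ext)
  fix i j :: "'p \<times> 'y"
  obtain r q where i: "i = (r, q)" by (cases i)
  obtain r' q' where j: "j = (r', q')" by (cases j)
  define B where "B = (\<lambda>(p :: 's \<times> 's) s s'. Phi (fst p) s * cnj (Phi (snd p) s'))"
  define c where "c = (\<lambda>(p :: 's \<times> 's). V r (fst p) * cnj (V r' (snd p)))"
  have blk: "(\<lambda>s s'. Y r s * cnj (Y r' s')) = (\<lambda>s s'. \<Sum>p\<in>UNIV. c p * B p s s')"
    unfolding Y mat_mult_def c_def B_def sum_prod_UNIV
    by (simp add: fun_eq_iff sum_distrib_left sum_distrib_right mult_ac) (intro allI, rule sum.swap)
  have "id_tensor N (ket_bra (\<lambda>(r, s). Y r s)) i j = N (\<lambda>s s'. Y r s * cnj (Y r' s')) q q'"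
    by (simp add: id_tensor_def ket_bra_def i j)
  also have "\<dots> = (\<Sum>p\<in>UNIV. c p * N (B p) q q')" unfolding blk linear_qmap_lin_comb[OF L finite] ..
  also have "\<dots> = (\<Sum>t\<in>UNIV. \<Sum>t'\<in>UNIV. V r t * cnj (V r' t') * N (\<lambda>s s'. Phi t s * cnj (Phi t' s')) q q')"
    unfolding sum_prod_UNIV c_def B_def by simp
  also have "\<dots> = (\<Sum>t\<in>UNIV. V r t * (\<Sum>t'\<in>UNIV. id_tensor N (ket_bra (\<lambda>(t, s). Phi t s)) (t, q) (t', q') * cnj (V r' t')))"
    by (simp add: id_tensor_def ket_bra_def sum_distrib_left mult_ac)
  also have "\<dots> = mat_mult (tensor_id_right V) (mat_mult (id_tensor N (ket_bra (\<lambda>(t, s). Phi t s))) (mat_adj (tensor_id_right V))) i j"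
  proof -
    have a1: "tensor_id_right V (r, q) (t, q1) = (if q = q1 then V r t else 0)" for t q1 by (simp add: tensor_id_right_def id_mat_def)
    have a2: "mat_adj (tensor_id_right V) (t, q1) (r', q') = (if q' = q1 then cnj (V r' t) else 0)" for t q1
      by (simp add: tensor_id_right_def id_mat_def mat_adj_def)
    show ?thesis unfolding i j mat_mult_def sum_prod_UNIV a1 a2
      by (simp add: if_0_mult mult_if_0)
  qed
  finally show "id_tensor N (ket_bra (\<lambda>(r, s). Y r s)) i j =
         mat_mult (tensor_id_right V) (mat_mult (id_tensor N (ket_bra (\<lambda>(t, s). Phi t s))) (mat_adj (tensor_id_right V))) i j" .
qed

lemma gram_diag_zero_column:
  fixes Z :: "'p::finite \<Rightarrow> 'x \<Rightarrow> complex"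
  assumes "mat_mult (mat_adj Z) Z k k = 0"
  shows "Z r k = 0"
proof -
  have e: "cnj (Z r' k) * Z r' k = complex_of_real ((cmod (Z r' k))\<^sup>2)" for r'
    by (simp only: complex_norm_square mult.commute)
  have "mat_mult (mat_adj Z) Z k k = (\<Sum>r'\<in>UNIV. complex_of_real ((cmod (Z r' k))\<^sup>2))"
    unfolding mat_mult_def mat_adj_def e ..
  hence "complex_of_real (\<Sum>r'\<in>UNIV. (cmod (Z r' k))\<^sup>2) = 0"
    using assms by (simp only: of_real_sum)
  hence "(\<Sum>r'\<in>UNIV. (cmod (Z r' k))\<^sup>2) = 0" by (simp only: of_real_eq_0_iff)
  hence "(cmod (Z r k))\<^sup>2 = 0" by (subst (asm) sum_nonneg_eq_0_iff) auto
  thus ?thesis by simp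
qed

lemma contraction_of_gram_unitary_diag:
  assumes U: "unitary U" and p: "\<And>k. p k \<le> 1" and VV: "mat_mult (mat_adj V) V = unitary_diag U p"
  shows "Re (cinner (mat_vec V u) (mat_vec V u)) \<le> Re (cinner u u)"
proof -
  have "cinner (mat_vec V u) (mat_vec V u) = cinner u (mat_vec (mat_mult (mat_adj V) V) u)"
    unfolding mat_vec_mult cinner_mat_vec[of u "mat_adj V"] mat_adj_adj ..
  hence "Re (cinner (mat_vec V u) (mat_vec V u)) = (\<Sum>k\<in>UNIV. p k * (cmod (cinner (mat_col U k) u))\<^sup>2)"
    unfolding VV quadratic_form_unitary_diag by simp
  also have "\<dots> \<le> (\<Sum>k\<in>UNIV. (cmod (cinner (mat_col U k) u))\<^sup>2)"
    by (rule sum_mono) (metis mult.commute mult_left_le p zero_le_power2)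
  also have "\<dots> = Re (cinner u u)" by (rule parseval[OF U])
  finally show ?thesis .
qed

lemma gram_unitary_diag_zero_column:
  fixes Y :: "'p::finite \<Rightarrow> 'x::finite \<Rightarrow> complex"
  assumes U: "unitary U" and G: "mat_mult (mat_adj Y) Y = unitary_diag U g" and gk: "g k = 0"
  shows "mat_mult Y U r k = 0"
proof -
  have "mat_mult (mat_adj (mat_mult Y U)) (mat_mult Y U) = mat_mult (mat_adj U) (mat_mult (mat_mult (mat_adj Y) Y) U)"
    by (simp add: mat_adj_mult mat_mult_assoc)
  also have "\<dots> = diag_mat g" using U unfolding G unitary_diag_eq_mat_mult unitary_def
    by (simp add: mat_mult_assoc) (simp add: mat_mult_assoc[symmetric])
  finally have "mat_mult (mat_adj (mat_mult Y U)) (mat_mult Y U) k k = 0" using gk by (simp add: diag_mat_def)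
  thus ?thesis by (rule gram_diag_zero_column)
qed

lemma polar_factorization:
  fixes Y :: "'p::finite \<Rightarrow> 'x::finite \<Rightarrow> complex"
  shows "\<exists>V (Phi :: 'x \<Rightarrow> 'x \<Rightarrow> complex). Y = mat_mult V Phi \<and> mat_mult (mat_adj Phi) Phi = mat_mult (mat_adj Y) Y \<and>
           (\<forall>u. Re (cinner (mat_vec V u) (mat_vec V u)) \<le> Re (cinner u u))"
proof -
  define G where "G = mat_mult (mat_adj Y) Y"
  obtain U g where U: "unitary U" and G: "G = unitary_diag U g"
    using spectral_theorem[OF psd_hermitian[OF psd_gram[of Y]]] unfolding G_def[symmetric] by blast
  have g0: "0 \<le> g k" for k using psd_unitary_diag_nonneg[OF U] psd_gram[of Y] unfolding G_def[symmetric] G by blast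
  txt \<open>Phi = |Y| and V = Y P, where P is the Moore-Penrose pseudo-inverse of |Y|.\<close>
  define Phi where "Phi = unitary_diag U (\<lambda>k. sqrt (g k))"
  define ginv where "ginv = (\<lambda>k. if g k = 0 then 0 else 1 / sqrt (g k))"
  define p where "p = (\<lambda>k. if g k = 0 then 0 else (1::real))"
  define V where "V = mat_mult Y (unitary_diag U ginv)"
  have gp1: "(\<lambda>k. ginv k * sqrt (g k)) = p"
    using g0 by (auto simp: fun_eq_iff ginv_def p_def)
  have gp2: "(\<lambda>k. ginv k * (g k * ginv k)) = p"
  proof
    fix k show "ginv k * (g k * ginv k) = p k"
    proof (cases "g k = 0")
      case False
      hence "sqrt (g k) * sqrt (g k) = g k" using g0[of k] by simp
      thus ?thesis using False g0[of k] by (simp add: ginv_def p_def field_simps)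
    qed (simp add: ginv_def p_def)
  qed
  have "mat_mult V Phi = mat_mult Y (unitary_diag U p)"
    unfolding V_def Phi_def by (simp add: mat_mult_assoc unitary_diag_mult[OF U] gp1)
  also have "\<dots> = mat_mult (mat_mult (mat_mult Y U) (diag_mat p)) (mat_adj U)"
    by (simp add: unitary_diag_eq_mat_mult mat_mult_assoc)
  also have "mat_mult (mat_mult Y U) (diag_mat p) = mat_mult Y U"
    using gram_unitary_diag_zero_column[OF U G[unfolded G_def]] unfolding mat_mult_diag_mat_right
    by (auto simp: fun_eq_iff p_def)
  also have "mat_mult (mat_mult Y U) (mat_adj U) = Y" using U by (simp add: mat_mult_assoc unitary_def)
  finally have VPhi: "Y = mat_mult V Phi" ..
  have "mat_mult (mat_adj V) V = mat_mult (unitary_diag U ginv) (mat_mult G (unitary_diag U ginv))"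
    unfolding V_def G_def mat_adj_mult mat_adj_unitary_diag by (simp add: mat_mult_assoc)
  also have "\<dots> = unitary_diag U p" by (simp add: G unitary_diag_mult[OF U] gp2)
  finally have VV: "mat_mult (mat_adj V) V = unitary_diag U p" .
  have Vc: "Re (cinner (mat_vec V u) (mat_vec V u)) \<le> Re (cinner u u)" for u
    by (rule contraction_of_gram_unitary_diag[OF U _ VV]) (simp add: p_def)
  have "mat_mult (mat_adj Phi) Phi = G"
    unfolding Phi_def mat_adj_unitary_diag unitary_diag_mult[OF U] G using g0 by simp
  thus ?thesis using VPhi Vc unfolding G_def by blast
qed

lemma trace_norm_reference_reduction:
  fixes N :: "'x::finite qop \<Rightarrow> 'y::finite qop" and y :: "'p::finite \<times> 'x \<Rightarrow> complex"
  assumes L: "linear_qmap N" and hp: "herm_preserving N" and ny: "(\<Sum>k\<in>UNIV. (cmod (y k))\<^sup>2) = 1"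
  shows "\<exists>\<phi> :: 'x \<times> 'x \<Rightarrow> complex. (\<Sum>k\<in>UNIV. (cmod (\<phi> k))\<^sup>2) = 1 \<and>
            trace_norm (id_tensor N (ket_bra y)) \<le> trace_norm (id_tensor N (ket_bra \<phi>))"
proof -
  define Y where "Y = (\<lambda>r s. y (r, s))"
  have yY: "y = (\<lambda>(r, s). Y r s)" by (simp add: Y_def fun_eq_iff)
  obtain V and Phi :: "'x \<Rightarrow> 'x \<Rightarrow> complex" where VPhi: "Y = mat_mult V Phi" and gram: "mat_mult (mat_adj Phi) Phi = mat_mult (mat_adj Y) Y"
    and Vc: "\<And>u. Re (cinner (mat_vec V u) (mat_vec V u)) \<le> Re (cinner u u)"
    using polar_factorization[of Y] by blast
  define \<phi> where "\<phi> = (\<lambda>(t, s). Phi t s)"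
  have "(\<Sum>k\<in>UNIV. (cmod (\<phi> k))\<^sup>2) = (\<Sum>k\<in>UNIV. (cmod (y k))\<^sup>2)"
    unfolding \<phi>_def yY sum_cmod_square_eq_qtrace gram ..
  hence n\<phi>: "(\<Sum>k\<in>UNIV. (cmod (\<phi> k))\<^sup>2) = 1" using ny by simp
  define K where "K = id_tensor N (ket_bra \<phi>)"
  have hK: "hermitian K" unfolding K_def
    by (rule herm_preserving_hermitian[OF herm_preserving_id_tensor[OF hp] psd_hermitian[OF psd_ket_bra]])
  have "id_tensor N (ket_bra y) = mat_mult (tensor_id_right V) (mat_mult K (mat_adj (tensor_id_right V)))"
    unfolding yY K_def \<phi>_def by (rule id_tensor_ket_bra_factor[OF L VPhi])
  hence "trace_norm (id_tensor N (ket_bra y)) \<le> trace_norm K"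
    using trace_norm_conj_contraction_le[OF hK tensor_id_right_contraction[OF Vc]] by simp
  thus ?thesis using n\<phi> unfolding K_def by blast
qed

section \<open>Extension by the memory systems\<close>

lemma ext_mem_eval:
  "ext_mem N X ((a, m), (b, n)) ((a2, m2), (b2, n2)) =
   N (\<lambda>i j. X ((fst i, m), (snd i, n)) ((fst j, m2), (snd j, n2))) (a, b) (a2, b2)"
proof -
  have "(\<lambda>(a', b') (a'', b''). X ((a', m), (b', n)) ((a'', m2), (b'', n2))) =
        (\<lambda>i j. X ((fst i, m), (snd i, n)) ((fst j, m2), (snd j, n2)))"
    by (simp add: fun_eq_iff case_prod_beta)
  thus ?thesis by (simp add: ext_mem_def)
qed

lemma fun_eq_pairs4I:
  assumes "\<And>a m b n a2 m2 b2 n2. F ((a, m), (b, n)) ((a2, m2), (b2, n2)) = G ((a, m), (b, n)) ((a2, m2), (b2, n2))"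
  shows "F = G"
proof (intro ext)
  fix i j
  show "F i j = G i j"
    using assms[of "fst (fst i)" "snd (fst i)" "fst (snd i)" "snd (snd i)"
                   "fst (fst j)" "snd (fst j)" "fst (snd j)" "snd (snd j)"] by simp
qed

lemma fun_eq_pairs5I:
  assumes "\<And>r a m b n r' a2 m2 b2 n2. F (r, ((a, m), (b, n))) (r', ((a2, m2), (b2, n2))) = G (r, ((a, m), (b, n))) (r', ((a2, m2), (b2, n2)))"
  shows "F = G"
proof (intro ext)
  fix i j
  show "F i j = G i j"
    using assms[of "fst i" "fst (fst (snd i))" "snd (fst (snd i))" "fst (snd (snd i))" "snd (snd (snd i))"
                   "fst j" "fst (fst (snd j))" "snd (fst (snd j))" "fst (snd (snd j))" "snd (snd (snd j))"] by simp
qed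

lemma ptrans_eval: "ptrans X (x, y) (x', y') = X (x, y') (x', y)" by (simp add: ptrans_def)

lemma ptrans_block: "ptrans (\<lambda>i j. X ((fst i, m), snd i, n) ((fst j, m2), snd j, n2)) =
   (\<lambda>i j. X ((fst i, m), snd j, n) ((fst j, m2), snd i, n2))"
  by (simp add: ptrans_def fun_eq_iff case_prod_beta)

lemma pt_conj_ext_mem: "pt_conj (ext_mem M) = ext_mem (pt_conj M)"
proof (rule ext)
  fix X
  show "pt_conj (ext_mem M) X = ext_mem (pt_conj M) X"
    by (rule fun_eq_pairs4I) (simp add: pt_conj_def ext_mem_eval ptrans_eval ptrans_block)
qed

lemma linear_qmap_ext_mem: assumes L: "linear_qmap N" shows "linear_qmap (ext_mem N)"
  unfolding linear_qmap_def
proof (intro conjI allI)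
  fix X Y
  show "ext_mem N (\<lambda>i j. X i j + Y i j) = (\<lambda>i j. ext_mem N X i j + ext_mem N Y i j)"
    by (rule fun_eq_pairs4I) (simp only: ext_mem_eval linear_qmap_add[OF L])
next
  fix c X
  show "ext_mem N (\<lambda>i j. c * X i j) = (\<lambda>i j. c * ext_mem N X i j)"
    by (rule fun_eq_pairs4I) (simp only: ext_mem_eval linear_qmap_scale[OF L])
qed

lemma mat_adj_block: "(\<lambda>i j. mat_adj X ((fst i, m), snd i, n) ((fst j, m2), snd j, n2)) =
           mat_adj (\<lambda>i j. X ((fst i, m2), snd i, n2) ((fst j, m), snd j, n))"
  by (simp add: mat_adj_def fun_eq_iff)

lemma herm_preserving_ext_mem: assumes hp: "herm_preserving N" shows "herm_preserving (ext_mem N)"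
  unfolding herm_preserving_def
proof
  fix X
  have e2: "N (mat_adj Z) u v = cnj (N Z v u)" for Z u v using hp by (simp add: herm_preserving_def mat_adj_def)
  show "ext_mem N (mat_adj X) = mat_adj (ext_mem N X)"
    by (rule fun_eq_pairs4I) (simp only: ext_mem_eval mat_adj_block e2, simp add: mat_adj_def ext_mem_eval)
qed

lemma qtrace_ext_mem_form:
  "qtrace (Z :: (('x::finite \<times> 'm::finite) \<times> ('y::finite \<times> 'n::finite)) qop) =
   (\<Sum>mn\<in>UNIV. \<Sum>ab\<in>UNIV. Z ((fst ab, fst mn), (snd ab, snd mn)) ((fst ab, fst mn), (snd ab, snd mn)))"
proof -
  define \<sigma> :: "('m \<times> 'n) \<times> ('x \<times> 'y) \<Rightarrow> ('x \<times> 'm) \<times> ('y \<times> 'n)"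
    where "\<sigma> = (\<lambda>(mn, ab). ((fst ab, fst mn), (snd ab, snd mn)))"
  have bs: "bij \<sigma>"
    by (rule bij_betw_byWitness[where f' = "\<lambda>((a, m), (b, n)). ((m, n), (a, b))"]) (auto simp: \<sigma>_def)
  show ?thesis
    unfolding qtrace_def sum_reindex_bij[OF bs, symmetric, where f = "\<lambda>x. Z x x"] sum_prod_UNIV
    by (simp add: \<sigma>_def)
qed

lemma tp_map_ext_mem:
  fixes N :: "('ai::finite \<times> 'bi::finite) qop \<Rightarrow> ('ao::finite \<times> 'bo::finite) qop"
  assumes tp: "tp_map N"
  shows "tp_map (ext_mem N :: (('ai \<times> 'am::finite) \<times> ('bi \<times> 'bm::finite)) qop \<Rightarrow> _)"
  unfolding tp_map_def
proof
  fix X :: "(('ai \<times> 'am) \<times> ('bi \<times> 'bm)) qop"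
  have "qtrace (ext_mem N X) = (\<Sum>mn\<in>UNIV. \<Sum>ab\<in>UNIV.
        N (\<lambda>i j. X ((fst i, fst mn), (snd i, snd mn)) ((fst j, fst mn), (snd j, snd mn))) ab ab)"
    unfolding qtrace_ext_mem_form by (simp add: ext_mem_eval)
  also have "\<dots> = (\<Sum>mn\<in>UNIV. qtrace (\<lambda>i j. X ((fst i, fst mn), (snd i, snd mn)) ((fst j, fst mn), (snd j, snd mn))))"
    using tp by (simp add: tp_map_def qtrace_def)
  also have "\<dots> = qtrace X" unfolding qtrace_ext_mem_form by (simp add: qtrace_def)
  finally show "qtrace (ext_mem N X) = qtrace X" .
qed

definition memory_to_reference :: "'r \<times> (('a \<times> 'm) \<times> ('b \<times> 'n)) \<Rightarrow> ('r \<times> ('m \<times> 'n)) \<times> ('a \<times> 'b)" where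
  "memory_to_reference = (\<lambda>(r, (a, m), (b, n)). ((r, (m, n)), (a, b)))"

definition reference_to_memory :: "('r \<times> ('m \<times> 'n)) \<times> ('a \<times> 'b) \<Rightarrow> 'r \<times> (('a \<times> 'm) \<times> ('b \<times> 'n))" where
  "reference_to_memory = (\<lambda>((r, (m, n)), (a, b)). (r, (a, m), (b, n)))"

lemma bij_reference_to_memory: "bij reference_to_memory"
  by (rule bij_betw_byWitness[where f' = memory_to_reference])
     (auto simp: reference_to_memory_def memory_to_reference_def split: prod.splits)

lemma bij_memory_to_reference: "bij memory_to_reference"
  by (rule bij_betw_byWitness[where f' = reference_to_memory])
     (auto simp: reference_to_memory_def memory_to_reference_def split: prod.splits)

lemma id_tensor_ext_mem_ket_bra:
  "id_tensor (ext_mem N) (ket_bra y) =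
    (\<lambda>i j. id_tensor N (ket_bra (y \<circ> reference_to_memory)) (memory_to_reference i) (memory_to_reference j))"
  by (rule fun_eq_pairs5I) (simp add: id_tensor_def ket_bra_def ext_mem_eval memory_to_reference_def reference_to_memory_def case_prod_beta)

section \<open>The diamond norm\<close>

lemma trace_norm_le_entries: "trace_norm (K :: 'x::finite qop) \<le> (\<Sum>i\<in>UNIV. 1 + (\<Sum>k\<in>UNIV. (cmod (K k i))\<^sup>2))"
proof -
  define S where "S = abs_op K"
  have pS: "psd S" and SS: "mat_mult S S = mat_mult (mat_adj K) K" using abs_op_psd_sqrt[of K] unfolding S_def by auto
  have hS: "hermitian S" by (rule psd_hermitian[OF pS])
  have tn: "trace_norm K = (\<Sum>i\<in>UNIV. Re (S i i))" unfolding trace_norm_def S_def[symmetric] qtrace_def by (simp add: Re_sum)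
  have "Re (S i i) \<le> 1 + (\<Sum>k\<in>UNIV. (cmod (K k i))\<^sup>2)" for i
  proof -
    have e1: "S i k * S k i = complex_of_real ((cmod (S k i))\<^sup>2)" for k
    proof -
      have "S i k * S k i = cnj (S k i) * S k i" using hermitian_entry[OF hS, of k i] by simp
      also have "\<dots> = complex_of_real ((cmod (S k i))\<^sup>2)" by (subst complex_norm_square) (rule mult.commute)
      finally show ?thesis .
    qed
    have e2: "cnj (K k i) * K k i = complex_of_real ((cmod (K k i))\<^sup>2)" for k
      by (subst complex_norm_square) (rule mult.commute)
    have "mat_mult S S i i = (\<Sum>k\<in>UNIV. complex_of_real ((cmod (S k i))\<^sup>2))"
      unfolding mat_mult_def e1 ..
    moreover have "mat_mult (mat_adj K) K i i = (\<Sum>k\<in>UNIV. complex_of_real ((cmod (K k i))\<^sup>2))"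
      unfolding mat_mult_def mat_adj_def e2 ..
    ultimately have eq: "(\<Sum>k\<in>UNIV. (cmod (S k i))\<^sup>2) = (\<Sum>k\<in>UNIV. (cmod (K k i))\<^sup>2)"
      using SS by (simp only: of_real_sum[symmetric] of_real_eq_iff)
    have "(cmod (S i i))\<^sup>2 \<le> (\<Sum>k\<in>UNIV. (cmod (S k i))\<^sup>2)"
      by (rule member_le_sum) auto
    moreover have "Re (S i i) \<le> cmod (S i i)" by (rule complex_Re_le_cmod)
    moreover have "cmod (S i i) \<le> 1 + (cmod (S i i))\<^sup>2"
    proof -
      have "(cmod (S i i) - 1)\<^sup>2 = (cmod (S i i))\<^sup>2 - 2 * cmod (S i i) + 1" by (simp add: power2_diff)
      thus ?thesis using zero_le_power2[of "cmod (S i i) - 1"] zero_le_power2[of "cmod (S i i)"] by linarith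
    qed
    ultimately show ?thesis using eq by linarith
  qed
  thus ?thesis unfolding tn by (rule sum_mono)
qed

definition diamond_values :: "(('c::finite) qop \<Rightarrow> ('d::finite) qop) \<Rightarrow> real set" where
  "diamond_values \<Phi> = {trace_norm (id_tensor \<Phi> (ket_bra \<psi>)) | \<psi> :: 'c \<times> 'c \<Rightarrow> complex. (\<Sum>k\<in>UNIV. (cmod (\<psi> k))\<^sup>2) = 1}"

lemma diamond_norm_eq_Sup: "diamond_norm \<Phi> = Sup (diamond_values \<Phi>)"
  unfolding diamond_norm_def diamond_values_def ket_bra_def ..

definition mat_unit :: "'x \<times> 'x \<Rightarrow> 'x \<Rightarrow> 'x \<Rightarrow> complex" where
  "mat_unit p = (\<lambda>a b. id_mat a (fst p) * id_mat b (snd p))"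

lemma mat_expand_basis:
  fixes B :: "'x::finite qop"
  shows "B = (\<lambda>x x'. \<Sum>p\<in>UNIV. B (fst p) (snd p) * mat_unit p x x')"
  by (simp add: mat_unit_def sum_prod_UNIV id_mat_def fun_eq_iff mult_if_0 if_0_mult)

lemma linear_qmap_entry_bound:
  fixes N :: "'x::finite qop \<Rightarrow> 'y qop"
  assumes L: "linear_qmap N" and B: "\<And>x x'. cmod (B x x') \<le> 1"
  shows "cmod (N B q q') \<le> (\<Sum>p\<in>UNIV. cmod (N (mat_unit p) q q'))"
proof -
  have "N B = N (\<lambda>x x'. \<Sum>p\<in>UNIV. B (fst p) (snd p) * mat_unit p x x')"
    by (subst mat_expand_basis[of B]) (rule refl)
  also have "\<dots> = (\<lambda>x x'. \<Sum>p\<in>UNIV. B (fst p) (snd p) * N (mat_unit p) x x')"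
    by (rule linear_qmap_lin_comb[OF L finite])
  finally have "cmod (N B q q') \<le> (\<Sum>p\<in>UNIV. cmod (B (fst p) (snd p)) * cmod (N (mat_unit p) q q'))"
    by (simp add: norm_mult[symmetric] norm_sum)
  also have "\<dots> \<le> (\<Sum>p\<in>UNIV. cmod (N (mat_unit p) q q'))"
    by (intro sum_mono mult_left_le_one_le B norm_ge_zero)
  finally show ?thesis .
qed

lemma unit_vector_entry_le_1:
  fixes \<psi> :: "'a::finite \<Rightarrow> complex"
  assumes "(\<Sum>k\<in>UNIV. (cmod (\<psi> k))\<^sup>2) = 1"
  shows "cmod (\<psi> a) \<le> 1"
proof -
  have "(cmod (\<psi> a))\<^sup>2 \<le> (\<Sum>k\<in>UNIV. (cmod (\<psi> k))\<^sup>2)" by (rule member_le_sum) auto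
  thus ?thesis using assms by (simp add: abs_square_le_1)
qed

lemma bdd_above_diamond_values:
  fixes N :: "'x::finite qop \<Rightarrow> 'y::finite qop"
  assumes L: "linear_qmap N"
  shows "bdd_above (diamond_values N)"
proof (rule bdd_aboveI)
  define C where "C = (\<lambda>q q'. \<Sum>p\<in>UNIV. cmod (N (mat_unit p) q q'))"
  fix x assume "x \<in> diamond_values N"
  then obtain \<psi> :: "'x \<times> 'x \<Rightarrow> complex" where u: "(\<Sum>k\<in>UNIV. (cmod (\<psi> k))\<^sup>2) = 1"
    and x: "x = trace_norm (id_tensor N (ket_bra \<psi>))" unfolding diamond_values_def by blast
  define K where "K = id_tensor N (ket_bra \<psi>)"
  have Kb: "cmod (K k i) \<le> C (snd k) (snd i)" for k i
  proof -
    have "K k i = N (\<lambda>x x'. \<psi> (fst k, x) * cnj (\<psi> (fst i, x'))) (snd k) (snd i)"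
      by (simp add: K_def id_tensor_def ket_bra_def case_prod_beta)
    also have "cmod \<dots> \<le> C (snd k) (snd i)" unfolding C_def
      by (rule linear_qmap_entry_bound[OF L])
         (simp add: norm_mult mult_le_one unit_vector_entry_le_1[OF u])
    finally show ?thesis .
  qed
  have "x \<le> (\<Sum>i\<in>UNIV. 1 + (\<Sum>k\<in>UNIV. (cmod (K k i))\<^sup>2))"
    unfolding x K_def[symmetric] by (rule trace_norm_le_entries)
  also have "\<dots> \<le> (\<Sum>i\<in>(UNIV :: ('x \<times> 'y) set). 1 + (\<Sum>k\<in>(UNIV :: ('x \<times> 'y) set). (C (snd k) (snd i))\<^sup>2))"
    by (intro sum_mono add_left_mono) (rule power_mono[OF Kb norm_ge_zero])
  finally show "x \<le> \<dots>" .
qed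

lemma diamond_values_le: "linear_qmap N \<Longrightarrow> x \<in> diamond_values N \<Longrightarrow> x \<le> diamond_norm N"
  unfolding diamond_norm_eq_Sup by (rule cSup_upper) (auto intro: bdd_above_diamond_values)

lemma trace_norm_ext_mem_ket_bra_le:
  fixes N :: "('ai::finite \<times> 'bi::finite) qop \<Rightarrow> ('ao::finite \<times> 'bo::finite) qop"
    and c :: "'r::finite \<times> (('ai \<times> 'am::finite) \<times> ('bi \<times> 'bm::finite)) \<Rightarrow> complex"
  assumes L: "linear_qmap N" and hp: "herm_preserving N" and u: "(\<Sum>k\<in>UNIV. (cmod (c k))\<^sup>2) = 1"
  shows "trace_norm (id_tensor (ext_mem N) (ket_bra c)) \<le> diamond_norm N"
proof -
  define K where "K = id_tensor N (ket_bra (c \<circ> reference_to_memory))"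
  have hK: "hermitian K" unfolding K_def
    by (rule herm_preserving_hermitian[OF herm_preserving_id_tensor[OF hp] psd_hermitian[OF psd_ket_bra]])
  have "trace_norm (id_tensor (ext_mem N) (ket_bra c)) \<le> trace_norm K"
    unfolding id_tensor_ext_mem_ket_bra K_def[symmetric] by (rule trace_norm_reindex_le[OF bij_memory_to_reference hK])
  moreover have "(\<Sum>k\<in>UNIV. (cmod ((c \<circ> reference_to_memory) k))\<^sup>2) = 1"
    using sum_reindex_bij[OF bij_reference_to_memory, of "\<lambda>k. (cmod (c k))\<^sup>2"] u by simp
  then obtain \<phi> :: "('ai \<times> 'bi) \<times> ('ai \<times> 'bi) \<Rightarrow> complex" where u\<phi>: "(\<Sum>k\<in>UNIV. (cmod (\<phi> k))\<^sup>2) = 1"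
    and le: "trace_norm K \<le> trace_norm (id_tensor N (ket_bra \<phi>))"
    using trace_norm_reference_reduction[OF L hp] unfolding K_def by blast
  have "trace_norm (id_tensor N (ket_bra \<phi>)) \<le> diamond_norm N"
    by (rule diamond_values_le[OF L]) (use u\<phi> in \<open>auto simp: diamond_values_def\<close>)
  ultimately show ?thesis using le by linarith
qed

lemma trace_norm_ext_mem_state_le:
  fixes N :: "('ai::finite \<times> 'bi::finite) qop \<Rightarrow> ('ao::finite \<times> 'bo::finite) qop"
    and Y :: "('r::finite \<times> (('ai \<times> 'am::finite) \<times> ('bi \<times> 'bm::finite))) qop"
  assumes L: "linear_qmap N" and hp: "herm_preserving N" and pY: "psd Y" and tY: "Re (qtrace Y) = 1"
  shows "trace_norm (id_tensor (ext_mem N) Y) \<le> diamond_norm N"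
proof -
  obtain U d where U: "unitary U" and Yd: "Y = unitary_diag U d" using spectral_theorem[OF psd_hermitian[OF pY]] by blast
  have d0: "0 \<le> d k" for k using psd_unitary_diag_nonneg[OF U] pY Yd by simp
  have sd: "(\<Sum>k\<in>UNIV. d k) = 1" using tY unfolding Yd qtrace_unitary_diag[OF U] by (simp add: Re_sum)
  have LB: "linear_qmap (id_tensor (ext_mem N))" by (rule linear_qmap_id_tensor[OF linear_qmap_ext_mem[OF L]])
  have hpB: "herm_preserving (id_tensor (ext_mem N))" by (rule herm_preserving_id_tensor[OF herm_preserving_ext_mem[OF hp]])
  have eq: "id_tensor (ext_mem N) Y = (\<lambda>i j. \<Sum>k\<in>UNIV. complex_of_real (d k) * id_tensor (ext_mem N) (ket_bra (mat_col U k)) i j)"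
    unfolding Yd unitary_diag_ket_bra by (rule linear_qmap_lin_comb[OF LB finite])
  have hs: "hermitian (id_tensor (ext_mem N) Y)" by (rule herm_preserving_hermitian[OF hpB psd_hermitian[OF pY]])
  have hk: "hermitian (id_tensor (ext_mem N) (ket_bra (mat_col U k)))" for k by (rule herm_preserving_hermitian[OF hpB psd_hermitian[OF psd_ket_bra]])
  have bk: "trace_norm (id_tensor (ext_mem N) (ket_bra (mat_col U k))) \<le> diamond_norm N" for k
  proof (rule trace_norm_ext_mem_ket_bra_le[OF L hp])
    show "(\<Sum>x\<in>UNIV. (cmod (mat_col U k x))\<^sup>2) = 1"
      using cinner_self_Re[of "mat_col U k"] unitary_col_norm[OF U, of k] by simp
  qed
  have "trace_norm (id_tensor (ext_mem N) Y) \<le> (\<Sum>k\<in>UNIV. \<bar>d k\<bar> * trace_norm (id_tensor (ext_mem N) (ket_bra (mat_col U k))))"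
    unfolding eq by (rule trace_norm_lin_comb_le) (use hs eq hk in auto)
  also have "\<dots> \<le> (\<Sum>k\<in>UNIV. d k * diamond_norm N)"
    by (rule sum_mono) (simp add: d0 bk mult_left_mono)
  also have "\<dots> = diamond_norm N" by (simp add: sum_distrib_right[symmetric] sd)
  finally show ?thesis .
qed

lemma pt_conj_superchannel_apply:
  "pt_conj (superchannel_apply Ppost Ppre M) = pt_conj Ppost \<circ> ext_mem (pt_conj M) \<circ> pt_conj Ppre"
  using pt_conj_comp[of Ppost "\<lambda>X. ext_mem M (Ppre X)"] pt_conj_comp[of "ext_mem M" Ppre]
  by (simp add: superchannel_apply_def comp_def pt_conj_ext_mem)

lemma unit_vector_exists: "\<exists>\<psi> :: 'x::finite \<Rightarrow> complex. (\<Sum>k\<in>UNIV. (cmod (\<psi> k))\<^sup>2) = 1"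
proof
  show "(\<Sum>k\<in>(UNIV :: 'x set). (cmod (if k = undefined then 1 else 0 :: complex))\<^sup>2) = 1"
    by (simp add: if_distrib[of "\<lambda>z. (cmod z)\<^sup>2"] cong: if_cong)
qed

lemma diamond_norm_le:
  fixes \<Phi> :: "'c::finite qop \<Rightarrow> 'd::finite qop"
  assumes "\<And>\<psi> :: 'c \<times> 'c \<Rightarrow> complex. (\<Sum>k\<in>UNIV. (cmod (\<psi> k))\<^sup>2) = 1 \<Longrightarrow> trace_norm (id_tensor \<Phi> (ket_bra \<psi>)) \<le> D"
  shows "diamond_norm \<Phi> \<le> D"
  unfolding diamond_norm_eq_Sup
proof (rule cSup_least)
  show "diamond_values \<Phi> \<noteq> {}" using unit_vector_exists unfolding diamond_values_def by blast
qed (use assms in \<open>auto simp: diamond_values_def\<close>)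

lemma one_le_diamond_norm:
  assumes L: "linear_qmap \<Phi>" and hp: "herm_preserving \<Phi>" and tp: "tp_map \<Phi>"
  shows "1 \<le> diamond_norm \<Phi>"
proof -
  obtain \<psi> :: "'a::finite \<times> 'a \<Rightarrow> complex" where u: "(\<Sum>k\<in>UNIV. (cmod (\<psi> k))\<^sup>2) = 1"
    using unit_vector_exists by blast
  have "1 = Re (qtrace (id_tensor \<Phi> (ket_bra \<psi>)))"
    unfolding qtrace_id_tensor[OF tp] qtrace_ket_bra cinner_self_Re u ..
  also have "\<dots> \<le> trace_norm (id_tensor \<Phi> (ket_bra \<psi>))"
    by (intro trace_le_trace_norm herm_preserving_hermitian[OF herm_preserving_id_tensor[OF hp]]
        psd_hermitian[OF psd_ket_bra])
  also have "\<dots> \<le> diamond_norm \<Phi>"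
    by (rule diamond_values_le[OF L]) (use u in \<open>auto simp: diamond_values_def\<close>)
  finally show ?thesis .
qed

lemma diamond_norm_channel_sandwich_le:
  fixes N :: "('ai::finite \<times> 'bi::finite) qop \<Rightarrow> ('ao::finite \<times> 'bo::finite) qop"
    and C :: "'x::finite qop \<Rightarrow> (('ai \<times> 'am::finite) \<times> ('bi \<times> 'bm::finite)) qop"
    and A :: "(('ao \<times> 'am) \<times> ('bo \<times> 'bm)) qop \<Rightarrow> 'y::finite qop"
  assumes A: "quantum_channel A" and C: "quantum_channel C"
    and L: "linear_qmap N" and hp: "herm_preserving N"
  shows "diamond_norm (A \<circ> ext_mem N \<circ> C) \<le> diamond_norm N"
proof (rule diamond_norm_le)
  fix \<psi> :: "'x \<times> 'x \<Rightarrow> complex" assume u: "(\<Sum>k\<in>UNIV. (cmod (\<psi> k))\<^sup>2) = 1"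
  define Y where "Y = id_tensor C (ket_bra \<psi>)"
  have pY: "psd Y" unfolding Y_def
    using C by (simp add: quantum_channel_def cp_map_id_tensor_psd psd_ket_bra)
  have tY: "Re (qtrace Y) = 1"
    using C u by (simp add: Y_def quantum_channel_def qtrace_id_tensor qtrace_ket_bra cinner_self_Re)
  define Z where "Z = id_tensor (ext_mem N) Y"
  have hZ: "hermitian Z" unfolding Z_def
    by (rule herm_preserving_hermitian[OF herm_preserving_id_tensor[OF herm_preserving_ext_mem[OF hp]] psd_hermitian[OF pY]])
  have eq: "id_tensor (A \<circ> ext_mem N \<circ> C) (ket_bra \<psi>) = id_tensor A Z"
    unfolding Z_def Y_def comp_def id_tensor_comp[of A "\<lambda>X. ext_mem N (C X)"] id_tensor_comp[of "ext_mem N" C] ..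
  have "trace_norm (id_tensor A Z) \<le> trace_norm Z"
    using A hZ by (simp add: quantum_channel_def trace_norm_channel_id_tensor_le)
  also have "\<dots> \<le> diamond_norm N" unfolding Z_def by (rule trace_norm_ext_mem_state_le[OF L hp pY tY])
  finally show "trace_norm (id_tensor (A \<circ> ext_mem N \<circ> C) (ket_bra \<psi>)) \<le> diamond_norm N"
    unfolding eq .
qed

theorem mainTheorem4:
  fixes M :: "(('ahi::finite) \<times> ('bhi::finite)) qop \<Rightarrow> (('aho::finite) \<times> ('bho::finite)) qop"
    and Ppre :: "(('a1::finite) \<times> ('b1::finite)) qop \<Rightarrow> (('ahi \<times> ('am::finite)) \<times> ('bhi \<times> ('bm::finite))) qop"
    and Ppost :: "(('aho \<times> 'am) \<times> ('bho \<times> 'bm)) qop \<Rightarrow> (('a2::finite) \<times> ('b2::finite)) qop"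
  assumes "quantum_channel M"
    and "cppt_channel Ppre"
    and "cppt_channel Ppost"
  shows "log_neg M \<ge> log_neg (superchannel_apply Ppost Ppre M)"
proof -
  let ?N = "pt_conj M" and ?A = "pt_conj Ppost" and ?C = "pt_conj Ppre"
  have A: "quantum_channel ?A" and C: "quantum_channel ?C"
    using assms(2,3) by (simp_all add: cppt_channel_pt_conj)
  have N: "linear_qmap ?N" "herm_preserving ?N" "tp_map ?N"
    using assms(1) by (simp_all add: quantum_channel_def linear_qmap_pt_conj tp_map_pt_conj
        herm_preserving_pt_conj quantum_channel_herm_preserving)
  have upper: "diamond_norm (?A \<circ> ext_mem ?N \<circ> ?C) \<le> diamond_norm ?N"
    by (rule diamond_norm_channel_sandwich_le[OF A C N(1,2)])
  have "1 \<le> diamond_norm (?A \<circ> ext_mem ?N \<circ> ?C)"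
    using A C N
    by (intro one_le_diamond_norm linear_qmap_comp herm_preserving_comp tp_map_comp
        linear_qmap_ext_mem herm_preserving_ext_mem tp_map_ext_mem)
       (simp_all add: quantum_channel_def quantum_channel_herm_preserving)
  with upper show ?thesis
    unfolding log_neg_def pt_conj_superchannel_apply by simp
qed

end
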